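(* Let $\psi$ be an inner function, let $a,b\in\mathbb{C}$ with $b\in\mathbb{D}$ and $|a|+|b|\le1$, and let $\varphi(z)=az\psi(z)+b$. Then the composition operator $C_\varphi$ on $H^2(\mathbb{D})$ satisfies $$\|C_\varphi\|=\sqrt{\frac{2}{1+|a|^2-|b|^2+\sqrt{(1-|a|^2+|b|^2)^2-4|b|^2}}}.$$
   Context: $\mathbb{D}$ is the open unit disc; $H^2(\mathbb{D})$ is the Hardy space of holomorphic $f(z)=\sum a_nz^n$ with $\|f\|^2=\sum|a_n|^2<\infty$. An inner function is a holomorphic map $\mathbb{D}\to\mathbb{D}$ whose radial limits have modulus $1$ a.e. on the unit circle. $C_\varphi f=f\circ\varphi$. *)

theory Defs
  imports "HOL-Complex_Analysis.Complex_Analysis"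
begin

abbreviation unit_disc :: "complex set" where
  "unit_disc \<equiv> ball 0 1"

definition taylor_coeff :: "(complex \<Rightarrow> complex) \<Rightarrow> nat \<Rightarrow> complex" where
  "taylor_coeff f n = (deriv ^^ n) f 0 / of_nat (fact n)"

definition H2 :: "(complex \<Rightarrow> complex) set" where
  "H2 = {f. f holomorphic_on unit_disc \<and> summable (\<lambda>n. (norm (taylor_coeff f n))\<^sup>2)}"

definition H2_norm :: "(complex \<Rightarrow> complex) \<Rightarrow> real" where
  "H2_norm f = sqrt (\<Sum>n. (norm (taylor_coeff f n))\<^sup>2)"

definition inner_function :: "(complex \<Rightarrow> complex) \<Rightarrow> bool" where
  "inner_function \<psi> \<longleftrightarrow>
     \<psi> holomorphic_on unit_disc \<and> \<psi> ` unit_disc \<subseteq> unit_disc \<and>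
     (AE t in lebesgue. t \<in> {0..2*pi} \<longrightarrow>
        (\<exists>L. norm L = 1 \<and> ((\<lambda>r. \<psi> (complex_of_real r * cis t)) \<longlongrightarrow> L) (at_left 1)))"

definition comp_op :: "(complex \<Rightarrow> complex) \<Rightarrow> (complex \<Rightarrow> complex) \<Rightarrow> (complex \<Rightarrow> complex)" where
  "comp_op \<phi> f = f \<circ> \<phi>"

definition comp_op_norm :: "(complex \<Rightarrow> complex) \<Rightarrow> real" where
  "comp_op_norm \<phi> = (SUP f \<in> {f \<in> H2. H2_norm f \<le> 1}. H2_norm (comp_op \<phi> f))"

end

theory Submission
  imports Defs
begin

text \<open>
  Upper bound: \<open>C\<^sub>\<phi> f = F (z \<psi> z)\<close> with \<open>F w = f (a w + b)\<close>. The map \<open>z \<psi> z\<close> sends the disc into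
  itself and fixes \<open>0\<close>, so Littlewood's subordination principle gives \<open>\<parallel>C\<^sub>\<phi> f\<parallel> \<le> \<parallel>F\<parallel>\<close>; a Schur
  test on the matrix expressing the Taylor coefficients of \<open>F\<close> through those of \<open>f\<close> gives Cowen's
  bound for the affine composition, \<open>\<parallel>F\<parallel>\<^sup>2 \<le> L \<parallel>f\<parallel>\<^sup>2\<close> with \<open>L\<close> the squared right-hand side.

  Lower bound: \<open>C\<^sub>\<phi>\<close> maps the reproducing kernel \<open>k\<^sub>w z = 1 / (1 - w\<^sup>* z)\<close> to a multiple of
  \<open>k\<^sub>v (z \<psi> z)\<close>. Because \<open>\<psi>\<close> has unimodular radial limits almost everywhere, the circle means of
  \<open>\<bar>\<psi>\<bar>\<^sup>2\<close> tend to \<open>1\<close>, and a Poisson kernel estimate shows \<open>\<parallel>k\<^sub>v (z \<psi> z)\<parallel> \<ge> \<parallel>k\<^sub>v\<parallel>\<close>. Taking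
  \<open>w = s b / \<bar>b\<bar>\<close> gives lower bounds that attain \<open>L\<close> at a root of a quadratic in \<open>s\<close>, or tend to it
  as \<open>s \<rightarrow> 1\<close> when \<open>\<bar>a\<bar> + \<bar>b\<bar> = 1\<close>.
\<close>

section \<open>Hardy space norms as circle means\<close>

lemma norm_circlepath_0 [simp]: "0 \<le> r \<Longrightarrow> norm (circlepath 0 r s) = r"
  by (simp add: circlepath norm_mult)

lemma taylor_coeff_sums:
  assumes "f holomorphic_on unit_disc" and "norm z < 1"
  shows "(\<lambda>n. taylor_coeff f n * z ^ n) sums f z"
  using holomorphic_power_series[OF assms(1), of z] assms(2) by (simp add: taylor_coeff_def)

lemma summable_norm_taylor_coeff:
  assumes hol: "f holomorphic_on unit_disc" and r: "0 \<le> r" "r < 1"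
  shows "summable (\<lambda>n. norm (taylor_coeff f n) * r ^ n)"
proof -
  have "conv_radius (taylor_coeff f) \<ge> 1"
  proof (rule conv_radius_geI_ex')
    fix \<rho> :: real
    assume "0 < \<rho>" "ereal \<rho> < 1"
    then show "summable (\<lambda>n. taylor_coeff f n * complex_of_real \<rho> ^ n)"
      using taylor_coeff_sums[OF hol, of "of_real \<rho>"] by (auto simp: sums_iff)
  qed
  then have "ereal (norm (complex_of_real r)) < conv_radius (taylor_coeff f)"
    using r by (auto intro: order_less_le_trans[of _ 1])
  from abs_summable_in_conv_radius[OF this] show ?thesis
    using r by (simp add: norm_mult norm_power)
qed

lemma taylor_coeff_has_integral_circlepath:
  assumes hol: "f holomorphic_on unit_disc" and r: "0 < r" "r < 1"
  shows "((\<lambda>s. f (circlepath 0 r s) / circlepath 0 r s ^ k) has_integral taylor_coeff f k) {0..1}"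
proof -
  have "((\<lambda>w. f w / (w - 0) ^ Suc k) has_contour_integral (2 * pi * \<i> / fact k * (deriv ^^ k) f 0))
      (circlepath 0 r)"
    using r by (intro Cauchy_has_contour_integral_higher_derivative_circlepath
        holomorphic_on_imp_continuous_on holomorphic_on_subset[OF hol]) auto
  then have "((\<lambda>s. f (circlepath 0 r s) / circlepath 0 r s ^ Suc k *
      vector_derivative (circlepath 0 r) (at s within {0..1}))
      has_integral (2 * pi * \<i> / fact k * (deriv ^^ k) f 0)) {0..1}"
    by (simp add: has_contour_integral_def)
  then have "((\<lambda>s. 2 * pi * \<i> * (f (circlepath 0 r s) / circlepath 0 r s ^ k))
      has_integral (2 * pi * \<i> / fact k * (deriv ^^ k) f 0)) {0..1}"
  proof (rule has_integral_eq[rotated])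
    fix s :: real
    assume "s \<in> {0..1}"
    then have "vector_derivative (circlepath 0 r) (at s within {0..1}) = 2 * pi * \<i> * circlepath 0 r s"
      by (simp add: vector_derivative_circlepath01) (simp add: circlepath)
    moreover have "circlepath 0 r s \<noteq> 0"
      using r by (auto simp: circlepath)
    ultimately show "f (circlepath 0 r s) / circlepath 0 r s ^ Suc k *
        vector_derivative (circlepath 0 r) (at s within {0..1}) =
        2 * pi * \<i> * (f (circlepath 0 r s) / circlepath 0 r s ^ k)"
      by (simp add: field_simps)
  qed
  from has_integral_mult_right[OF this, of "1 / (2 * pi * \<i>)"] show ?thesis
    by (simp add: taylor_coeff_def field_simps)
qed

lemma cnj_circlepath_power:
  assumes "0 < r"
  shows "cnj (circlepath 0 r s ^ n) = r ^ (2 * n) / circlepath 0 r s ^ n"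
proof -
  have "cnj (circlepath 0 r s) * circlepath 0 r s = of_real (r\<^sup>2)"
    using assms by (simp add: complex_norm_square[symmetric] mult.commute)
  then have "cnj (circlepath 0 r s) = r\<^sup>2 / circlepath 0 r s"
    using assms by (auto simp: field_simps circlepath)
  then show ?thesis
    by (simp add: power_divide power_mult)
qed

text \<open>Orthogonality of the monomials on the circle leaves only the diagonal terms.\<close>

lemma has_integral_mult_cnj_partial_sum:
  assumes hol: "f holomorphic_on unit_disc" and r: "0 < r" "r < 1"
  defines "\<gamma> \<equiv> circlepath 0 r"
  shows "((\<lambda>s. f (\<gamma> s) * cnj (\<Sum>n<N. taylor_coeff f n * \<gamma> s ^ n))
      has_integral of_real (\<Sum>n<N. (norm (taylor_coeff f n))\<^sup>2 * r ^ (2 * n))) {0..1}"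
proof -
  define c where "c = taylor_coeff f"
  have "((\<lambda>s. \<Sum>n<N. cnj (c n) * r ^ (2 * n) * (f (\<gamma> s) / \<gamma> s ^ n))
      has_integral (\<Sum>n<N. cnj (c n) * r ^ (2 * n) * c n)) {0..1}"
    unfolding \<gamma>_def c_def
    by (intro has_integral_sum has_integral_mult_right taylor_coeff_has_integral_circlepath[OF hol r]) auto
  moreover have "(\<lambda>s. f (\<gamma> s) * cnj (\<Sum>n<N. c n * \<gamma> s ^ n)) =
      (\<lambda>s. \<Sum>n<N. cnj (c n) * r ^ (2 * n) * (f (\<gamma> s) / \<gamma> s ^ n))"
    using cnj_circlepath_power[OF r(1)] by (simp add: \<gamma>_def sum_distrib_left field_simps)
  moreover have "(\<Sum>n<N. cnj (c n) * r ^ (2 * n) * c n) = of_real (\<Sum>n<N. (norm (c n))\<^sup>2 * r ^ (2 * n))"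
    unfolding of_real_sum
  proof (rule sum.cong[OF refl])
    fix n
    have "cnj (c n) * c n = of_real ((norm (c n))\<^sup>2)"
      by (subst complex_norm_square) (rule mult.commute)
    then show "cnj (c n) * r ^ (2 * n) * c n = of_real ((norm (c n))\<^sup>2 * r ^ (2 * n))"
      by (metis mult.commute mult.left_commute of_real_mult of_real_power)
  qed
  ultimately show ?thesis
    by (simp only: c_def)
qed

lemma summable_taylor_coeff_sq_power:
  assumes hol: "f holomorphic_on unit_disc" and r: "0 \<le> r" "r < 1"
  shows "summable (\<lambda>n. (norm (taylor_coeff f n))\<^sup>2 * r ^ (2 * n))"
proof -
  have sA: "summable (\<lambda>n. norm (taylor_coeff f n) * r ^ n)"
    by (rule summable_norm_taylor_coeff[OF hol r])
  define B where "B = (\<Sum>n. norm (taylor_coeff f n) * r ^ n)"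
  have B: "norm (taylor_coeff f n) * r ^ n \<le> B" for n
    unfolding B_def using r by (intro sum_le_suminf[OF sA, of "{n}", simplified]) auto
  show ?thesis
  proof (rule summable_comparison_test'[OF summable_mult[OF sA, of B]])
    fix n
    have "(norm (taylor_coeff f n))\<^sup>2 * r ^ (2 * n) =
        (norm (taylor_coeff f n) * r ^ n) * (norm (taylor_coeff f n) * r ^ n)"
      by (simp add: power2_eq_square power_mult_distrib power_mult mult_ac)
    also have "\<dots> \<le> B * (norm (taylor_coeff f n) * r ^ n)"
      using B[of n] r by (intro mult_right_mono) auto
    finally show "norm ((norm (taylor_coeff f n))\<^sup>2 * r ^ (2 * n)) \<le> B * (norm (taylor_coeff f n) * r ^ n)"
      by simp
  qed
qed

lemma has_integral_norm_sq_circlepath: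
  assumes hol: "f holomorphic_on unit_disc" and r: "0 < r" "r < 1"
  shows "((\<lambda>s. (norm (f (circlepath 0 r s)))\<^sup>2)
      has_integral (\<Sum>n. (norm (taylor_coeff f n))\<^sup>2 * r ^ (2 * n))) {0..1}"
proof -
  define c where "c = taylor_coeff f"
  define \<gamma> where "\<gamma> = circlepath 0 r"
  define A where "A = (\<Sum>n. norm (c n) * r ^ n)"
  define S where "S N s = (\<Sum>n<N. c n * \<gamma> s ^ n)" for N s
  have sA: "summable (\<lambda>n. norm (c n) * r ^ n)"
    unfolding c_def using r by (intro summable_norm_taylor_coeff[OF hol]) auto
  have S_le: "norm (S N s) \<le> A" for N s
  proof -
    have "norm (S N s) \<le> (\<Sum>n<N. norm (c n) * r ^ n)"
      unfolding S_def using r by (intro order_trans[OF norm_sum] sum_mono) (simp add: \<gamma>_def norm_mult norm_power)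
    also have "\<dots> \<le> A"
      unfolding A_def using sA r by (intro sum_le_suminf) auto
    finally show ?thesis .
  qed
  have S_lim: "(\<lambda>N. S N s) \<longlonglongrightarrow> f (\<gamma> s)" for s
    using taylor_coeff_sums[OF hol, of "\<gamma> s"] r by (simp add: sums_def S_def c_def \<gamma>_def)
  have f_le: "norm (f (\<gamma> s)) \<le> A" for s
    using S_lim by (rule LIMSEQ_le_const2[OF tendsto_norm]) (simp add: S_le)
  have "((\<lambda>s. of_real ((norm (f (\<gamma> s)))\<^sup>2) :: complex)
      has_integral of_real (\<Sum>n. (norm (c n))\<^sup>2 * r ^ (2 * n))) {0..1}"
  proof (rule has_integral_dominated_convergence)
    show "((\<lambda>s. f (\<gamma> s) * cnj (S N s)) has_integral of_real (\<Sum>n<N. (norm (c n))\<^sup>2 * r ^ (2 * n))) {0..1}" for N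
      unfolding S_def \<gamma>_def c_def by (rule has_integral_mult_cnj_partial_sum[OF hol r])
    show "(\<lambda>s::real. A * A) integrable_on {0..1}"
      by (rule integrable_const_ivl)
    show "\<forall>s\<in>{0..1}. norm (f (\<gamma> s) * cnj (S N s)) \<le> A * A" for N
      by (auto simp: norm_mult intro!: mult_mono f_le S_le order_trans[OF norm_ge_zero S_le])
    show "\<forall>s\<in>{0..1}. (\<lambda>N. f (\<gamma> s) * cnj (S N s)) \<longlonglongrightarrow> of_real ((norm (f (\<gamma> s)))\<^sup>2)"
    proof
      fix s
      have "(\<lambda>N. f (\<gamma> s) * cnj (S N s)) \<longlonglongrightarrow> f (\<gamma> s) * cnj (f (\<gamma> s))"
        by (intro tendsto_intros S_lim)
      then show "(\<lambda>N. f (\<gamma> s) * cnj (S N s)) \<longlonglongrightarrow> of_real ((norm (f (\<gamma> s)))\<^sup>2)"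
        by (simp only: complex_norm_square)
    qed
    show "(\<lambda>N. complex_of_real (\<Sum>n<N. (norm (c n))\<^sup>2 * r ^ (2 * n))) \<longlonglongrightarrow>
        of_real (\<Sum>n. (norm (c n))\<^sup>2 * r ^ (2 * n))"
      unfolding c_def using r
      by (intro tendsto_intros summable_LIMSEQ summable_taylor_coeff_sq_power[OF hol]) auto
  qed
  from has_integral_linear[OF this bounded_linear_Re] show ?thesis
    by (simp add: o_def \<gamma>_def c_def)
qed

definition circle_mean_sq :: "(complex \<Rightarrow> complex) \<Rightarrow> real \<Rightarrow> real" where
  "circle_mean_sq f r = integral {0..1} (\<lambda>s. (norm (f (circlepath 0 r s)))\<^sup>2)"

lemma circle_mean_sq_eq_suminf:
  assumes "f holomorphic_on unit_disc" and "0 < r" "r < 1"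
  shows "circle_mean_sq f r = (\<Sum>n. (norm (taylor_coeff f n))\<^sup>2 * r ^ (2 * n))"
  unfolding circle_mean_sq_def using has_integral_norm_sq_circlepath[OF assms] by (rule integral_unique)

lemma has_integral_circle_mean_sq:
  assumes "f holomorphic_on unit_disc" and "0 < r" "r < 1"
  shows "((\<lambda>s. (norm (f (circlepath 0 r s)))\<^sup>2) has_integral circle_mean_sq f r) {0..1}"
  using has_integral_norm_sq_circlepath[OF assms] circle_mean_sq_eq_suminf[OF assms] by simp

lemma H2_norm_power2:
  assumes "f \<in> H2"
  shows "(H2_norm f)\<^sup>2 = (\<Sum>n. (norm (taylor_coeff f n))\<^sup>2)"
  unfolding H2_norm_def by (rule real_sqrt_pow2, rule suminf_nonneg) (use assms in \<open>auto simp: H2_def\<close>)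

lemma H2_norm_nonneg:
  assumes "f \<in> H2"
  shows "0 \<le> H2_norm f"
  unfolding H2_norm_def by (rule real_sqrt_ge_zero, rule suminf_nonneg) (use assms in \<open>auto simp: H2_def\<close>)

lemma circle_mean_sq_le_H2_norm:
  assumes f: "f \<in> H2" and r: "0 < r" "r < 1"
  shows "circle_mean_sq f r \<le> (H2_norm f)\<^sup>2"
proof -
  have hol: "f holomorphic_on unit_disc" and sm: "summable (\<lambda>n. (norm (taylor_coeff f n))\<^sup>2)"
    using f by (auto simp: H2_def)
  have "circle_mean_sq f r = (\<Sum>n. (norm (taylor_coeff f n))\<^sup>2 * r ^ (2 * n))"
    by (rule circle_mean_sq_eq_suminf[OF hol r])
  also have "\<dots> \<le> (\<Sum>n. (norm (taylor_coeff f n))\<^sup>2)"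
    using r by (intro suminf_le summable_taylor_coeff_sq_power[OF hol] sm)
      (auto intro!: mult_left_le power_le_one)
  finally show ?thesis
    using H2_norm_power2[OF f] by simp
qed

lemma H2_of_circle_mean_sq_bounded:
  assumes hol: "f holomorphic_on unit_disc"
    and bound: "\<And>r. 0 < r \<Longrightarrow> r < 1 \<Longrightarrow> circle_mean_sq f r \<le> C"
  shows "f \<in> H2" and "(H2_norm f)\<^sup>2 \<le> C"
proof -
  define c where "c n = (norm (taylor_coeff f n))\<^sup>2" for n
  have partial: "(\<Sum>n<N. c n) \<le> C" for N
  proof -
    have "((\<lambda>r. \<Sum>n<N. c n * r ^ (2 * n)) \<longlongrightarrow> (\<Sum>n<N. c n * 1 ^ (2 * n))) (at_left (1::real))"
      by (intro tendsto_intros)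
    moreover have "\<forall>\<^sub>F r in at_left 1. (\<Sum>n<N. c n * r ^ (2 * n)) \<le> C"
    proof (rule eventually_mono[OF eventually_at_left_real[of 0 1]])
      fix r :: real
      assume "r \<in> {0<..<1}"
      then have r: "0 < r" "r < 1" by auto
      have "(\<Sum>n<N. c n * r ^ (2 * n)) \<le> (\<Sum>n. c n * r ^ (2 * n))"
        unfolding c_def using r by (intro sum_le_suminf summable_taylor_coeff_sq_power[OF hol]) auto
      also have "\<dots> = circle_mean_sq f r"
        unfolding c_def by (rule circle_mean_sq_eq_suminf[OF hol r, symmetric])
      finally show "(\<Sum>n<N. c n * r ^ (2 * n)) \<le> C"
        using bound[OF r] by linarith
    qed simp
    ultimately show ?thesis
      by (simp add: tendsto_upperbound)
  qed
  have sm: "summable c"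
    by (rule summableI_nonneg_bounded[OF _ partial]) (simp add: c_def)
  then show "f \<in> H2"
    using hol by (simp add: H2_def c_def[abs_def])
  have "(\<Sum>n. c n) \<le> C"
    by (rule suminf_le_const[OF sm partial])
  then show "(H2_norm f)\<^sup>2 \<le> C"
    using H2_norm_power2[OF \<open>f \<in> H2\<close>] by (simp add: c_def)
qed

section \<open>Littlewood's subordination principle\<close>

lemma taylor_coeff_add_const:
  assumes "h holomorphic_on unit_disc"
  shows "taylor_coeff (\<lambda>z. d + h z) n = (if n = 0 then d else 0) + taylor_coeff h n"
proof -
  have "(deriv ^^ n) (\<lambda>z. d + h z) 0 = (deriv ^^ n) (\<lambda>z. d) 0 + (deriv ^^ n) h 0"
    by (rule higher_deriv_add[OF _ assms]) auto
  then show ?thesis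
    by (simp add: taylor_coeff_def add_divide_distrib)
qed

lemma circle_mean_sq_add_const:
  assumes hol: "h holomorphic_on unit_disc" and h0: "h 0 = 0" and r: "0 < r" "r < 1"
  shows "circle_mean_sq (\<lambda>z. d + h z) r = (norm d)\<^sup>2 + circle_mean_sq h r"
proof -
  have "taylor_coeff h 0 = 0"
    using h0 by (simp add: taylor_coeff_def)
  then have coeff: "(norm (taylor_coeff (\<lambda>z. d + h z) n))\<^sup>2 * r ^ (2 * n) =
      (if n = 0 then (norm d)\<^sup>2 else 0) + (norm (taylor_coeff h n))\<^sup>2 * r ^ (2 * n)" for n
    by (cases "n = 0") (auto simp: taylor_coeff_add_const[OF hol])
  have "(\<lambda>n. (if n = 0 then (norm d)\<^sup>2 else 0) + (norm (taylor_coeff h n))\<^sup>2 * r ^ (2 * n))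
      sums ((norm d)\<^sup>2 + circle_mean_sq h r)"
    using r by (intro sums_add sums_single[of 0 "\<lambda>_. (norm d)\<^sup>2", simplified])
      (simp add: circle_mean_sq_eq_suminf[OF hol r] summable_sums summable_taylor_coeff_sq_power[OF hol])
  moreover have "(\<lambda>z. d + h z) holomorphic_on unit_disc"
    by (intro holomorphic_intros hol)
  ultimately show ?thesis
    by (simp add: circle_mean_sq_eq_suminf[OF _ r] coeff sums_iff)
qed

text \<open>Split off the constant term, which is orthogonal to the rest because \<open>u 0 = 0\<close>, and use
  \<open>\<bar>u\<bar> \<le> 1\<close> on the remaining factor.\<close>

lemma circle_mean_sq_polynomial_subordinate_le:
  assumes u: "u holomorphic_on unit_disc" and u_le: "\<And>z. norm z < 1 \<Longrightarrow> norm (u z) \<le> norm z"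
    and r: "0 < r" "r < 1"
  shows "circle_mean_sq (\<lambda>z. \<Sum>n<N. d n * u z ^ n) r \<le> (\<Sum>n<N. (norm (d n))\<^sup>2)"
proof (induction N arbitrary: d)
  case 0
  show ?case
    by (simp add: circle_mean_sq_def)
next
  case (Suc N)
  define Q where "Q = (\<lambda>z. \<Sum>n<N. d (Suc n) * u z ^ n)"
  have hol_Q: "Q holomorphic_on unit_disc"
    unfolding Q_def by (intro holomorphic_intros u)
  have hol_uQ: "(\<lambda>z. u z * Q z) holomorphic_on unit_disc"
    by (intro holomorphic_intros u hol_Q)
  have split: "(\<lambda>z. \<Sum>n<Suc N. d n * u z ^ n) = (\<lambda>z. d 0 + u z * Q z)"
    by (rule ext) (simp only: sum.lessThan_Suc_shift Q_def, simp add: sum_distrib_left mult_ac)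
  have "circle_mean_sq (\<lambda>z. d 0 + u z * Q z) r = (norm (d 0))\<^sup>2 + circle_mean_sq (\<lambda>z. u z * Q z) r"
    using u_le[of 0] by (intro circle_mean_sq_add_const[OF hol_uQ _ r]) simp
  moreover have "circle_mean_sq (\<lambda>z. u z * Q z) r \<le> circle_mean_sq Q r"
    unfolding circle_mean_sq_def
  proof (rule integral_le[OF has_integral_integrable[OF has_integral_circle_mean_sq[OF hol_uQ r]]
        has_integral_integrable[OF has_integral_circle_mean_sq[OF hol_Q r]]])
    fix s :: real
    have "norm (u (circlepath 0 r s)) \<le> 1"
      using u_le[of "circlepath 0 r s"] r by simp
    then show "(norm (u (circlepath 0 r s) * Q (circlepath 0 r s)))\<^sup>2 \<le> (norm (Q (circlepath 0 r s)))\<^sup>2"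
      by (simp add: norm_mult power_mult_distrib mult_left_le_one_le power_le_one)
  qed
  moreover have "circle_mean_sq Q r \<le> (\<Sum>n<N. (norm (d (Suc n)))\<^sup>2)"
    unfolding Q_def by (rule Suc.IH)
  moreover have "(\<Sum>n<Suc N. (norm (d n))\<^sup>2) = (norm (d 0))\<^sup>2 + (\<Sum>n<N. (norm (d (Suc n)))\<^sup>2)"
    by (rule sum.lessThan_Suc_shift)
  ultimately show ?case
    unfolding split by linarith
qed

lemma circle_mean_sq_partial_sums_compose_tendsto:
  assumes hol_F: "F holomorphic_on unit_disc" and u: "u holomorphic_on unit_disc"
    and u_le: "\<And>z. norm z < 1 \<Longrightarrow> norm (u z) \<le> norm z" and r: "0 < r" "r < 1"
  shows "(\<lambda>N. circle_mean_sq (\<lambda>z. \<Sum>n<N. taylor_coeff F n * u z ^ n) r) \<longlonglongrightarrow> circle_mean_sq (\<lambda>z. F (u z)) r"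
proof -
  define d where "d = taylor_coeff F"
  define \<gamma> where "\<gamma> = circlepath 0 r"
  define P where "P N z = (\<Sum>n<N. d n * u z ^ n)" for N z
  define A where "A = (\<Sum>n. norm (d n) * r ^ n)"
  have u_\<gamma>: "norm (u (\<gamma> s)) \<le> r" for s
    using u_le[of "\<gamma> s"] r by (simp add: \<gamma>_def)
  have hol_P: "P N holomorphic_on unit_disc" for N
    unfolding P_def by (intro holomorphic_intros u)
  have sum_A: "summable (\<lambda>n. norm (d n) * r ^ n)"
    unfolding d_def using r by (intro summable_norm_taylor_coeff[OF hol_F]) auto
  have P_le: "norm ((norm (P N (\<gamma> s)))\<^sup>2) \<le> A\<^sup>2" for N s
  proof -
    have "norm (P N (\<gamma> s)) \<le> (\<Sum>n<N. norm (d n) * r ^ n)"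
      unfolding P_def by (rule order_trans[OF norm_sum])
        (auto intro!: sum_mono mult_left_mono power_mono u_\<gamma> simp: norm_mult norm_power)
    also have "\<dots> \<le> A"
      unfolding A_def using sum_A r by (intro sum_le_suminf) auto
    finally show ?thesis
      by (simp add: power_mono)
  qed
  have P_lim: "(\<lambda>N. (norm (P N (\<gamma> s)))\<^sup>2) \<longlonglongrightarrow> (norm (F (u (\<gamma> s))))\<^sup>2" for s
  proof -
    have "norm (u (\<gamma> s)) < 1"
      using u_\<gamma>[of s] r by simp
    from taylor_coeff_sums[OF hol_F this] have "(\<lambda>N. P N (\<gamma> s)) \<longlonglongrightarrow> F (u (\<gamma> s))"
      by (simp add: sums_def P_def d_def)
    then show ?thesis
      by (intro tendsto_intros)
  qed
  have "(\<lambda>N. circle_mean_sq (P N) r) \<longlonglongrightarrow> circle_mean_sq (\<lambda>z. F (u z)) r"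
    unfolding circle_mean_sq_def \<gamma>_def[symmetric]
    using P_le P_lim
    by (intro dominated_convergence(2)[where h="\<lambda>_. A\<^sup>2"])
      (auto simp: \<gamma>_def intro: has_integral_integrable[OF has_integral_circle_mean_sq[OF hol_P r]])
  then show ?thesis
    by (simp only: P_def[abs_def] d_def)
qed

lemma circle_mean_sq_compose_subordinate_le:
  assumes F: "F \<in> H2" and u: "u holomorphic_on unit_disc"
    and u_le: "\<And>z. norm z < 1 \<Longrightarrow> norm (u z) \<le> norm z" and r: "0 < r" "r < 1"
  shows "circle_mean_sq (\<lambda>z. F (u z)) r \<le> (H2_norm F)\<^sup>2"
proof -
  have hol_F: "F holomorphic_on unit_disc"
    using F by (simp add: H2_def)
  have "circle_mean_sq (\<lambda>z. \<Sum>n<N. taylor_coeff F n * u z ^ n) r \<le> (H2_norm F)\<^sup>2" for N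
  proof -
    have "circle_mean_sq (\<lambda>z. \<Sum>n<N. taylor_coeff F n * u z ^ n) r \<le> (\<Sum>n<N. (norm (taylor_coeff F n))\<^sup>2)"
      by (rule circle_mean_sq_polynomial_subordinate_le[OF u u_le r])
    also have "\<dots> \<le> (\<Sum>n. (norm (taylor_coeff F n))\<^sup>2)"
      using F by (intro sum_le_suminf) (auto simp: H2_def)
    finally show ?thesis
      using H2_norm_power2[OF F] by simp
  qed
  with circle_mean_sq_partial_sums_compose_tendsto[OF hol_F u u_le r] show ?thesis
    by (intro LIMSEQ_le_const2) auto
qed

theorem littlewood_subordination:
  assumes F: "F \<in> H2" and u: "u holomorphic_on unit_disc"
    and u_le: "\<And>z. norm z < 1 \<Longrightarrow> norm (u z) \<le> norm z"
  shows "(\<lambda>z. F (u z)) \<in> H2" and "(H2_norm (\<lambda>z. F (u z)))\<^sup>2 \<le> (H2_norm F)\<^sup>2"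
proof -
  have "u ` unit_disc \<subseteq> unit_disc"
    using u_le by force
  with u F have hol: "(\<lambda>z. F (u z)) holomorphic_on unit_disc"
    using holomorphic_on_compose_gen[of u unit_disc F unit_disc] by (simp add: H2_def o_def)
  show "(\<lambda>z. F (u z)) \<in> H2" and "(H2_norm (\<lambda>z. F (u z)))\<^sup>2 \<le> (H2_norm F)\<^sup>2"
    by (metis H2_of_circle_mean_sq_bounded hol circle_mean_sq_compose_subordinate_le[OF F u u_le])+
qed

section \<open>The Schur test\<close>

lemma weighted_Cauchy_Schwarz:
  fixes w y :: "'a \<Rightarrow> real"
  assumes "\<And>i. i \<in> I \<Longrightarrow> 0 \<le> w i"
  shows "(\<Sum>i\<in>I. w i * y i)\<^sup>2 \<le> (\<Sum>i\<in>I. w i) * (\<Sum>i\<in>I. w i * (y i)\<^sup>2)"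
proof -
  have "(\<Sum>i\<in>I. sqrt (w i) * (sqrt (w i) * y i))\<^sup>2 \<le>
      (\<Sum>i\<in>I. (sqrt (w i))\<^sup>2) * (\<Sum>i\<in>I. (sqrt (w i) * y i)\<^sup>2)"
    by (rule Cauchy_Schwarz_ineq_sum)
  moreover have "(\<Sum>i\<in>I. sqrt (w i) * (sqrt (w i) * y i)) = (\<Sum>i\<in>I. w i * y i)"
    by (rule sum.cong) (use assms in \<open>auto simp: real_sqrt_mult_self mult.assoc[symmetric]\<close>)
  moreover have "(\<Sum>i\<in>I. (sqrt (w i))\<^sup>2) = (\<Sum>i\<in>I. w i)"
    by (rule sum.cong) (use assms in auto)
  moreover have "(\<Sum>i\<in>I. (sqrt (w i) * y i)\<^sup>2) = (\<Sum>i\<in>I. w i * (y i)\<^sup>2)"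
    by (rule sum.cong) (use assms in \<open>auto simp: power_mult_distrib\<close>)
  ultimately show ?thesis
    by simp
qed

lemma Schur_test_partial:
  fixes A :: "nat \<Rightarrow> nat \<Rightarrow> real" and p q x :: "nat \<Rightarrow> real"
  assumes A: "\<And>n m. 0 \<le> A n m" and p: "\<And>m. 0 < p m" and \<alpha>: "0 \<le> \<alpha>"
    and row: "\<And>n. (\<Sum>m<M. A n m * p m) \<le> \<alpha> * q n"
    and col: "\<And>m. (\<Sum>n<N. A n m * q n) \<le> \<beta> * p m"
  shows "(\<Sum>n<N. (\<Sum>m<M. A n m * x m)\<^sup>2) \<le> \<alpha> * \<beta> * (\<Sum>m<M. (x m)\<^sup>2)"
proof -
  define S where "S n = (\<Sum>m<M. A n m * p m * (x m / p m)\<^sup>2)" for n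
  have S_nonneg: "0 \<le> S n" for n
    unfolding S_def using A p by (intro sum_nonneg) (simp add: less_imp_le)
  have row_sq: "(\<Sum>m<M. A n m * x m)\<^sup>2 \<le> \<alpha> * q n * S n" for n
  proof -
    have eq: "(\<Sum>m<M. A n m * x m) = (\<Sum>m<M. A n m * p m * (x m / p m))"
      using p by (intro sum.cong) (auto simp: less_imp_neq[symmetric])
    have "(\<Sum>m<M. A n m * x m)\<^sup>2 \<le> (\<Sum>m<M. A n m * p m) * S n"
      unfolding eq S_def by (rule weighted_Cauchy_Schwarz) (use A p in \<open>simp add: less_imp_le\<close>)
    also have "\<dots> \<le> \<alpha> * q n * S n"
      by (rule mult_right_mono[OF row S_nonneg])
    finally show ?thesis .
  qed
  have "(\<Sum>n<N. (\<Sum>m<M. A n m * x m)\<^sup>2) \<le> (\<Sum>n<N. \<alpha> * q n * S n)"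
    by (rule sum_mono[OF row_sq])
  also have "\<dots> = \<alpha> * (\<Sum>m<M. (x m)\<^sup>2 / p m * (\<Sum>n<N. A n m * q n))"
    using p by (simp add: S_def sum_distrib_left sum_distrib_right sum.swap[of _ "{..<N}"]
        power_divide power2_eq_square mult_ac less_imp_neq[symmetric])
  also have "\<dots> \<le> \<alpha> * (\<Sum>m<M. (x m)\<^sup>2 / p m * (\<beta> * p m))"
    using p by (intro mult_left_mono[OF sum_mono \<alpha>] mult_left_mono[OF col]) (simp add: less_imp_le)
  also have "\<dots> = \<alpha> * \<beta> * (\<Sum>m<M. (x m)\<^sup>2)"
    using p by (simp add: sum_distrib_left less_imp_neq[symmetric] mult_ac)
  finally show ?thesis .
qed

lemma Schur_test:
  fixes A :: "nat \<Rightarrow> nat \<Rightarrow> real" and p q x :: "nat \<Rightarrow> real"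
  assumes A: "\<And>n m. 0 \<le> A n m" and p: "\<And>m. 0 < p m" and \<alpha>: "0 \<le> \<alpha>" and \<beta>: "0 \<le> \<beta>"
    and row: "\<And>n M. (\<Sum>m<M. A n m * p m) \<le> \<alpha> * q n"
    and col: "\<And>m N. (\<Sum>n<N. A n m * q n) \<le> \<beta> * p m"
    and x: "summable (\<lambda>m. (x m)\<^sup>2)"
  shows "summable (\<lambda>m. A n m * x m)"
    and "summable (\<lambda>n. (\<Sum>m. A n m * x m)\<^sup>2)"
    and "(\<Sum>n. (\<Sum>m. A n m * x m)\<^sup>2) \<le> \<alpha> * \<beta> * (\<Sum>m. (x m)\<^sup>2)"
proof -
  define X where "X = (\<Sum>m. (x m)\<^sup>2)"
  have partial: "(\<Sum>n<N. (\<Sum>m<M. A n m * y m)\<^sup>2) \<le> \<alpha> * \<beta> * X" if y: "\<And>m. (y m)\<^sup>2 = (x m)\<^sup>2" for N M y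
  proof -
    have "(\<Sum>n<N. (\<Sum>m<M. A n m * y m)\<^sup>2) \<le> \<alpha> * \<beta> * (\<Sum>m<M. (x m)\<^sup>2)"
      unfolding y[symmetric] by (rule Schur_test_partial[OF A p \<alpha> row col])
    also have "\<dots> \<le> \<alpha> * \<beta> * X"
      unfolding X_def using x \<alpha> \<beta> by (intro mult_left_mono sum_le_suminf) auto
    finally show ?thesis .
  qed
  have row_summable: "summable (\<lambda>m. A n m * x m)" for n
  proof (rule summable_comparison_test')
    have "(\<Sum>m<M. A n m * \<bar>x m\<bar>)\<^sup>2 \<le> (\<Sum>k<Suc n. (\<Sum>m<M. A k m * \<bar>x m\<bar>)\<^sup>2)" for M
      by (rule member_le_sum) auto
    also have "\<dots> M \<le> \<alpha> * \<beta> * X" for M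
      by (rule partial) simp
    finally have "(\<Sum>m<M. A n m * \<bar>x m\<bar>)\<^sup>2 \<le> \<alpha> * \<beta> * X" for M .
    then have "(\<Sum>m<M. A n m * \<bar>x m\<bar>) \<le> sqrt (\<alpha> * \<beta> * X)" for M
      by (simp add: real_le_rsqrt)
    then show "summable (\<lambda>m. A n m * \<bar>x m\<bar>)"
      using A by (intro summableI_nonneg_bounded) auto
    show "norm (A n m * x m) \<le> A n m * \<bar>x m\<bar>" for m
      using A by (simp add: abs_mult)
  qed
  then show "summable (\<lambda>m. A n m * x m)" .
  have bounded: "(\<Sum>n<N. (\<Sum>m. A n m * x m)\<^sup>2) \<le> \<alpha> * \<beta> * X" for N
  proof (rule LIMSEQ_le_const2)
    show "(\<lambda>M. \<Sum>n<N. (\<Sum>m<M. A n m * x m)\<^sup>2) \<longlonglongrightarrow> (\<Sum>n<N. (\<Sum>m. A n m * x m)\<^sup>2)"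
      by (intro tendsto_intros summable_LIMSEQ row_summable)
  qed (use partial in auto)
  show sq_summable: "summable (\<lambda>n. (\<Sum>m. A n m * x m)\<^sup>2)"
    by (rule summableI_nonneg_bounded[OF _ bounded]) simp
  show "(\<Sum>n. (\<Sum>m. A n m * x m)\<^sup>2) \<le> \<alpha> * \<beta> * (\<Sum>m. (x m)\<^sup>2)"
    using suminf_le_const[OF sq_summable bounded] by (simp add: X_def)
qed

text \<open>Cowen computed the squared norm of \<open>C\<^sub>\<phi>\<close> for the affine map \<open>\<phi> z = a z + b\<close> with
  \<open>\<bar>a\<bar> + \<bar>b\<bar> \<le> 1\<close> to be \<open>cowen_constant \<bar>a\<bar> \<bar>b\<bar>\<close>.\<close>

definition cowen_constant :: "real \<Rightarrow> real \<Rightarrow> real" where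
  "cowen_constant \<alpha> \<beta> = 2 / (1 + \<alpha>\<^sup>2 - \<beta>\<^sup>2 + sqrt ((1 - \<alpha>\<^sup>2 + \<beta>\<^sup>2)\<^sup>2 - 4 * \<beta>\<^sup>2))"

lemma cowen_constant_zero:
  assumes "\<alpha>\<^sup>2 \<le> 1"
  shows "cowen_constant \<alpha> 0 = 1"
  using assms by (simp add: cowen_constant_def)

lemma cowen_root:
  assumes \<alpha>: "0 \<le> \<alpha>" and \<beta>: "0 < \<beta>" and \<alpha>\<beta>: "\<alpha> + \<beta> \<le> 1"
  obtains t where "0 < t" "t \<le> 1" "\<beta> * t\<^sup>2 - (1 - \<alpha>\<^sup>2 + \<beta>\<^sup>2) * t + \<beta> = 0"
    "cowen_constant \<alpha> \<beta> = 1 / (1 - \<beta> * t)"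
proof -
  define Q where "Q = 1 - \<alpha>\<^sup>2 + \<beta>\<^sup>2"
  define D where "D = sqrt (Q\<^sup>2 - 4 * \<beta>\<^sup>2)"
  have "\<alpha>\<^sup>2 \<le> (1 - \<beta>)\<^sup>2"
    using \<alpha> \<alpha>\<beta> by (intro power_mono) auto
  then have Q_minus: "0 \<le> Q - 2 * \<beta>"
    by (simp add: Q_def power2_eq_square algebra_simps)
  have disc: "Q\<^sup>2 - 4 * \<beta>\<^sup>2 = (Q - 2 * \<beta>) * (Q + 2 * \<beta>)"
    by (simp add: power2_eq_square algebra_simps)
  then have "0 \<le> Q\<^sup>2 - 4 * \<beta>\<^sup>2"
    using Q_minus \<beta> by simp
  then have D_sq: "D\<^sup>2 = Q\<^sup>2 - 4 * \<beta>\<^sup>2" and D_nonneg: "0 \<le> D"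
    by (simp_all add: D_def)
  have "D\<^sup>2 < Q\<^sup>2"
    using D_sq \<beta> by simp
  then have "D < Q"
    by (rule power_less_imp_less_base) (use Q_minus \<beta> in simp)
  moreover have "Q - 2 * \<beta> \<le> D"
  proof (rule power2_le_imp_le)
    show "(Q - 2 * \<beta>)\<^sup>2 \<le> D\<^sup>2"
      unfolding D_sq disc using Q_minus \<beta> by (simp add: power2_eq_square mult_left_mono)
  qed (rule D_nonneg)
  moreover define t where "t = (Q - D) / (2 * \<beta>)"
  ultimately have t: "0 < t" "t \<le> 1"
    using \<beta> by simp_all
  have "4 * \<beta> * (\<beta> * t\<^sup>2 - Q * t + \<beta>) = (Q - D)\<^sup>2 - 2 * Q * (Q - D) + 4 * \<beta>\<^sup>2"
    using \<beta> by (simp add: t_def power2_eq_square field_simps)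
  also have "\<dots> = D\<^sup>2 - Q\<^sup>2 + 4 * \<beta>\<^sup>2"
    by (simp add: power2_eq_square algebra_simps)
  finally have "\<beta> * t\<^sup>2 - Q * t + \<beta> = 0"
    using \<beta> D_sq by simp
  moreover have denom: "1 + \<alpha>\<^sup>2 - \<beta>\<^sup>2 + D = 2 * (1 - \<beta> * t)"
    using \<beta> by (simp add: t_def Q_def field_simps)
  then have "cowen_constant \<alpha> \<beta> = 1 / (1 - \<beta> * t)"
    unfolding cowen_constant_def Q_def[symmetric] D_def[symmetric] denom divide_divide_eq_left[symmetric] by simp
  ultimately show thesis
    using t that unfolding Q_def by blast
qed

lemma cowen_parameter:
  assumes \<alpha>: "0 \<le> \<alpha>" and \<beta>: "0 \<le> \<beta>" "\<beta> < 1" and \<alpha>\<beta>: "\<alpha> + \<beta> \<le> 1"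
  obtains t where "0 < t" "\<beta> * t < 1" "\<beta> * t\<^sup>2 - (1 - \<alpha>\<^sup>2 + \<beta>\<^sup>2) * t + \<beta> \<le> 0"
    "cowen_constant \<alpha> \<beta> = 1 / (1 - \<beta> * t)"
proof (cases "\<beta> = 0")
  case True
  have "\<alpha>\<^sup>2 \<le> 1"
    using \<alpha> \<alpha>\<beta> True by (simp add: power_le_one)
  then show thesis
    using True by (intro that[of 1]) (simp_all add: cowen_constant_zero)
next
  case False
  then have "0 < \<beta>"
    using \<beta> by simp
  then obtain t where "0 < t" "t \<le> 1" "\<beta> * t\<^sup>2 - (1 - \<alpha>\<^sup>2 + \<beta>\<^sup>2) * t + \<beta> = 0"
    "cowen_constant \<alpha> \<beta> = 1 / (1 - \<beta> * t)"
    by (rule cowen_root[OF \<alpha> _ \<alpha>\<beta>])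
  moreover have "\<beta> * t < 1" if "t \<le> 1"
    using \<beta> mult_left_le[OF that \<beta>(1)] by linarith
  ultimately show thesis
    by (intro that[of t]) simp_all
qed

lemma cowen_constant_nonneg:
  assumes "0 \<le> \<alpha>" "0 \<le> \<beta>" "\<beta> < 1" "\<alpha> + \<beta> \<le> 1"
  shows "0 \<le> cowen_constant \<alpha> \<beta>"
proof -
  obtain t where "\<beta> * t < 1" "cowen_constant \<alpha> \<beta> = 1 / (1 - \<beta> * t)"
    using cowen_parameter[OF assms] by blast
  then show ?thesis
    by simp
qed

lemma cowen_constant_boundary:
  assumes "\<alpha> + \<beta> = 1"
  shows "cowen_constant \<alpha> \<beta> = 1 / \<alpha>"
proof -
  have \<beta>: "\<beta> = 1 - \<alpha>"
    using assms by simp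
  have "(1 - \<alpha>\<^sup>2 + \<beta>\<^sup>2)\<^sup>2 - 4 * \<beta>\<^sup>2 = 0" and "1 + \<alpha>\<^sup>2 - \<beta>\<^sup>2 = 2 * \<alpha>"
    unfolding \<beta> by (simp_all add: power2_eq_square algebra_simps)
  then show ?thesis
    by (simp add: cowen_constant_def)
qed

lemma tendsto_cowen_constant_boundary:
  assumes \<alpha>: "0 < \<alpha>" and \<alpha>\<beta>: "\<alpha> + \<beta> = 1"
  shows "((\<lambda>s. (1 - s\<^sup>2) / ((1 - s * \<beta>)\<^sup>2 - (s * \<alpha>)\<^sup>2)) \<longlongrightarrow> cowen_constant \<alpha> \<beta>) (at_left 1)"
proof -
  have \<beta>: "\<beta> = 1 - \<alpha>"
    using \<alpha>\<beta> by simp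
  have "(1 - s\<^sup>2) / ((1 - s * \<beta>)\<^sup>2 - (s * \<alpha>)\<^sup>2) = (1 + s) / (1 - s * \<beta> + s * \<alpha>)" if "s < 1" for s
  proof -
    have "(1 - s * \<beta>)\<^sup>2 - (s * \<alpha>)\<^sup>2 = (1 - s) * (1 - s * \<beta> + s * \<alpha>)"
      unfolding \<beta> by (simp add: power2_eq_square algebra_simps)
    moreover have "1 - s\<^sup>2 = (1 - s) * (1 + s)"
      by (simp add: power2_eq_square algebra_simps)
    ultimately show ?thesis
      using that by simp
  qed
  then have "\<forall>\<^sub>F s in at_left 1. (1 + s) / (1 - s * \<beta> + s * \<alpha>) = (1 - s\<^sup>2) / ((1 - s * \<beta>)\<^sup>2 - (s * \<alpha>)\<^sup>2)"
    by (auto intro!: eventually_mono[OF eventually_at_left_real[of 0 1]])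
  moreover have "((\<lambda>s. (1 + s) / (1 - s * \<beta> + s * \<alpha>)) \<longlongrightarrow> (1 + 1) / (1 - 1 * \<beta> + 1 * \<alpha>)) (at_left 1)"
    using \<alpha> \<beta> by (intro tendsto_intros) auto
  moreover have "(1 + 1) / (1 - 1 * \<beta> + 1 * \<alpha>) = cowen_constant \<alpha> \<beta>"
    unfolding cowen_constant_boundary[OF \<alpha>\<beta>] using \<alpha> by (simp add: \<beta> field_simps)
  ultimately show ?thesis
    by (simp add: tendsto_cong)
qed

lemma cowen_constant_attained:
  assumes \<alpha>: "0 \<le> \<alpha>" and \<beta>: "0 < \<beta>" and \<alpha>\<beta>: "\<alpha> + \<beta> < 1"
  obtains t where "0 < t" "t < 1" "(1 - t\<^sup>2) / ((1 - t * \<beta>)\<^sup>2 - (t * \<alpha>)\<^sup>2) = cowen_constant \<alpha> \<beta>"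
proof -
  obtain t where t: "0 < t" "t \<le> 1" and root: "\<beta> * t\<^sup>2 - (1 - \<alpha>\<^sup>2 + \<beta>\<^sup>2) * t + \<beta> = 0"
    and cowen: "cowen_constant \<alpha> \<beta> = 1 / (1 - \<beta> * t)"
    using cowen_root[OF \<alpha> \<beta>] \<alpha>\<beta> by auto
  have "t \<noteq> 1"
  proof
    assume "t = 1"
    then have "\<alpha>\<^sup>2 = (1 - \<beta>)\<^sup>2"
      using root by (simp add: power2_eq_square algebra_simps)
    then show False
      using \<alpha> \<beta> \<alpha>\<beta> by (simp add: power2_eq_iff)
  qed
  then have "0 < 1 - t\<^sup>2"
    using t by (simp add: abs_square_less_1)
  moreover have "(1 - t * \<beta>)\<^sup>2 - (t * \<alpha>)\<^sup>2 - (1 - t * \<beta>) * (1 - t\<^sup>2) =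
      - t * (\<beta> * t\<^sup>2 - (1 - \<alpha>\<^sup>2 + \<beta>\<^sup>2) * t + \<beta>)"
    by (simp add: power2_eq_square algebra_simps)
  then have "(1 - t * \<beta>)\<^sup>2 - (t * \<alpha>)\<^sup>2 = (1 - t * \<beta>) * (1 - t\<^sup>2)"
    unfolding root by simp
  ultimately have "(1 - t\<^sup>2) / ((1 - t * \<beta>)\<^sup>2 - (t * \<alpha>)\<^sup>2) = cowen_constant \<alpha> \<beta>"
    by (simp add: cowen mult.commute)
  with t \<open>t \<noteq> 1\<close> show thesis
    using that by simp
qed

lemma cowen_constant_le:
  assumes \<alpha>: "0 \<le> \<alpha>" and \<beta>: "0 \<le> \<beta>" "\<beta> < 1" and \<alpha>\<beta>: "\<alpha> + \<beta> \<le> 1"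
    and bound: "\<And>s. 0 \<le> s \<Longrightarrow> s < 1 \<Longrightarrow> (1 - s\<^sup>2) / ((1 - s * \<beta>)\<^sup>2 - (s * \<alpha>)\<^sup>2) \<le> N"
  shows "cowen_constant \<alpha> \<beta> \<le> N"
proof -
  consider "\<alpha> + \<beta> = 1" | "\<beta> = 0" "\<alpha> + \<beta> < 1" | "0 < \<beta>" "\<alpha> + \<beta> < 1"
    using \<alpha>\<beta> \<beta> by linarith
  then show ?thesis
  proof cases
    case 1
    have "\<forall>\<^sub>F s in at_left 1. (1 - s\<^sup>2) / ((1 - s * \<beta>)\<^sup>2 - (s * \<alpha>)\<^sup>2) \<le> N"
      using bound by (auto intro!: eventually_mono[OF eventually_at_left_real[of 0 1]])
    with tendsto_cowen_constant_boundary[OF _ 1] 1 \<beta> show ?thesis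
      by (simp add: tendsto_upperbound)
  next
    case 2
    then show ?thesis
      using bound[of 0] \<alpha>\<beta> \<alpha> by (simp add: cowen_constant_zero power_le_one)
  next
    case 3
    then obtain t where "0 < t" "t < 1" "(1 - t\<^sup>2) / ((1 - t * \<beta>)\<^sup>2 - (t * \<alpha>)\<^sup>2) = cowen_constant \<alpha> \<beta>"
      using cowen_constant_attained[OF \<alpha>] by blast
    then show ?thesis
      using bound[of t] by simp
  qed
qed

section \<open>Composition with affine maps\<close>

lemma higher_deriv_inverse_one_minus:
  fixes e z :: complex
  assumes "1 - e * z \<noteq> 0"
  shows "(deriv ^^ n) (\<lambda>w. 1 / (1 - e * w)) z = fact n * e ^ n / (1 - e * z) ^ Suc n"
  using assms
proof (induction n arbitrary: z)
  case 0
  then show ?case by simp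
next
  case (Suc n z)
  have "open {w. 1 - e * w \<noteq> 0}"
    by (intro open_Collect_neq continuous_intros)
  then have "\<forall>\<^sub>F w in nhds z. (deriv ^^ n) (\<lambda>w. 1 / (1 - e * w)) w = fact n * e ^ n / (1 - e * w) ^ Suc n"
    using Suc by (auto elim!: eventually_mono[OF eventually_nhds_in_open])
  then have "(deriv ^^ Suc n) (\<lambda>w. 1 / (1 - e * w)) z = deriv (\<lambda>w. fact n * e ^ n / (1 - e * w) ^ Suc n) z"
    by (simp add: deriv_cong_ev)
  also have "\<dots> = fact n * e ^ n * of_nat (Suc n) * e / (1 - e * z) ^ Suc (Suc n)"
    using Suc.prems
    by (intro DERIV_imp_deriv) (auto intro!: derivative_eq_intros simp: divide_simps, cases n; simp add: algebra_simps)
  finally show ?case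
    by (simp add: algebra_simps)
qed

lemma higher_deriv_sums:
  assumes hol: "f holomorphic_on unit_disc" and b: "norm b < 1"
  shows "(\<lambda>m. of_nat (m choose n) * taylor_coeff f m * b ^ (m - n)) sums ((deriv ^^ n) f b / fact n)"
proof -
  have "(deriv ^^ n) f holomorphic_on unit_disc"
    by (rule holomorphic_higher_deriv[OF hol]) auto
  from holomorphic_power_series[OF this, of b] b
  have "(\<lambda>j. (deriv ^^ j) ((deriv ^^ n) f) 0 / fact j * b ^ j / fact n) sums ((deriv ^^ n) f b / fact n)"
    by (intro sums_divide) simp
  moreover have "(deriv ^^ j) ((deriv ^^ n) f) 0 / fact j * b ^ j / fact n =
      of_nat ((j + n) choose n) * taylor_coeff f (j + n) * b ^ (j + n - n)" for j
  proof -
    have "(of_nat ((j + n) choose n) :: complex) = fact (j + n) / (fact n * fact j)"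
      using binomial_fact[of n "j + n"] by simp
    then show ?thesis
      by (simp add: taylor_coeff_def funpow_add field_simps)
  qed
  ultimately show ?thesis
    by (subst sums_zero_iff_shift[of n, symmetric]) simp_all
qed

lemma binomial_series_sums:
  fixes z :: real
  assumes "\<bar>z\<bar> < 1"
  shows "(\<lambda>m. real (m choose n) * z ^ (m - n)) sums (1 / (1 - z) ^ Suc n)"
proof -
  have deriv: "(deriv ^^ m) (\<lambda>w. 1 / (1 - w)) w = fact m / (1 - w) ^ Suc m" if "w \<noteq> 1" for m and w :: complex
    using higher_deriv_inverse_one_minus[of 1 w m] that by simp
  have "(\<lambda>w::complex. 1 / (1 - w)) holomorphic_on unit_disc"
    by (intro holomorphic_intros) auto
  from higher_deriv_sums[OF this, of "of_real z" n] assms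
  have "(\<lambda>m. complex_of_real (real (m choose n) * z ^ (m - n))) sums complex_of_real (1 / (1 - z) ^ Suc n)"
    by (simp add: taylor_coeff_def deriv)
  then show ?thesis
    by (simp only: sums_of_real_iff)
qed

lemma taylor_coeff_compose_affine:
  assumes hol: "f holomorphic_on unit_disc" and maps: "\<And>w. norm w < 1 \<Longrightarrow> norm (a * w + b) < 1"
  shows "taylor_coeff (\<lambda>z. f (a * z + b)) n = a ^ n * ((deriv ^^ n) f b / fact n)"
proof -
  have "(deriv ^^ n) (\<lambda>w. f (a * w + b)) 0 = a ^ n * (deriv ^^ n) f (a * 0 + b)"
    by (rule higher_deriv_compose_linear'[where S=unit_disc, OF hol open_ball open_ball]) (use maps in auto)
  then show ?thesis
    by (simp add: taylor_coeff_def)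
qed

lemma sum_binomial_row_le:
  fixes \<alpha> \<beta> t :: real
  assumes \<alpha>: "0 \<le> \<alpha>" and \<beta>: "0 \<le> \<beta>" and t: "0 < t" "\<beta> * t < 1"
  shows "(\<Sum>m<M. \<alpha> ^ n * real (m choose n) * \<beta> ^ (m - n) * t ^ m)
      \<le> 1 / (1 - \<beta> * t) * (\<alpha> * t / (1 - \<beta> * t)) ^ n"
proof -
  define g where "g m = real (m choose n) * (\<beta> * t) ^ (m - n)" for m
  have g_sums: "g sums (1 / (1 - \<beta> * t) ^ Suc n)"
    unfolding g_def using \<beta> t by (intro binomial_series_sums) simp
  have "\<alpha> ^ n * real (m choose n) * \<beta> ^ (m - n) * t ^ m = (\<alpha> * t) ^ n * g m" for m
    by (cases "n \<le> m") (auto simp: g_def power_mult_distrib le_add_diff_inverse power_add[symmetric] mult_ac)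
  then have "(\<Sum>m<M. \<alpha> ^ n * real (m choose n) * \<beta> ^ (m - n) * t ^ m) = (\<alpha> * t) ^ n * (\<Sum>m<M. g m)"
    by (simp add: sum_distrib_left)
  also have "\<dots> \<le> (\<alpha> * t) ^ n * (\<Sum>m. g m)"
    using \<alpha> \<beta> t by (intro mult_left_mono sum_le_suminf[OF sums_summable[OF g_sums]]) (auto simp: g_def)
  also have "\<dots> = 1 / (1 - \<beta> * t) * (\<alpha> * t / (1 - \<beta> * t)) ^ n"
    by (simp add: sums_unique[OF g_sums, symmetric] power_divide field_simps)
  finally show ?thesis .
qed

lemma sum_binomial_column_le:
  fixes \<alpha> \<beta> s :: real
  assumes "0 \<le> \<alpha>" "0 \<le> \<beta>" "0 \<le> s"
  shows "(\<Sum>n<N. \<alpha> ^ n * real (m choose n) * \<beta> ^ (m - n) * s ^ n) \<le> (\<alpha> * s + \<beta>) ^ m"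
proof -
  have "(\<Sum>n<N. \<alpha> ^ n * real (m choose n) * \<beta> ^ (m - n) * s ^ n)
      \<le> (\<Sum>n<max N (Suc m). \<alpha> ^ n * real (m choose n) * \<beta> ^ (m - n) * s ^ n)"
    using assms by (intro sum_mono2) auto
  also have "\<dots> = (\<Sum>n\<le>m. \<alpha> ^ n * real (m choose n) * \<beta> ^ (m - n) * s ^ n)"
    by (rule sum.mono_neutral_right) auto
  also have "\<dots> = (\<alpha> * s + \<beta>) ^ m"
    by (simp add: binomial_ring power_mult_distrib mult_ac)
  finally show ?thesis .
qed

text \<open>The Schur test with \<open>p m = t ^ m\<close> and \<open>q n = (\<alpha> t / (1 - \<beta> t)) ^ n\<close>, applied to the matrix
  expressing the Taylor coefficients of \<open>f (a z + b)\<close> through those of \<open>f\<close>.\<close>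

lemma affine_coeff_sq_sum_le:
  fixes x :: "nat \<Rightarrow> real" and \<alpha> \<beta> t :: real
  assumes x: "summable (\<lambda>m. (x m)\<^sup>2)" and \<alpha>: "0 \<le> \<alpha>" and \<beta>: "0 \<le> \<beta>"
    and t: "0 < t" "\<beta> * t < 1" and root: "\<beta> * t\<^sup>2 - (1 - \<alpha>\<^sup>2 + \<beta>\<^sup>2) * t + \<beta> \<le> 0"
  shows "summable (\<lambda>m. \<alpha> ^ n * real (m choose n) * \<beta> ^ (m - n) * x m)"
    and "summable (\<lambda>n. (\<Sum>m. \<alpha> ^ n * real (m choose n) * \<beta> ^ (m - n) * x m)\<^sup>2)"
    and "(\<Sum>n. (\<Sum>m. \<alpha> ^ n * real (m choose n) * \<beta> ^ (m - n) * x m)\<^sup>2) \<le> (\<Sum>m. (x m)\<^sup>2) / (1 - \<beta> * t)"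
proof -
  define s where "s = \<alpha> * t / (1 - \<beta> * t)"
  have s: "0 \<le> s"
    using \<alpha> t by (simp add: s_def)
  have "\<beta> * (1 - \<beta> * t) + \<alpha>\<^sup>2 * t \<le> t * (1 - \<beta> * t)"
    using root by (simp add: power2_eq_square algebra_simps)
  then have "\<beta> + \<alpha> * s \<le> t"
    using t by (simp add: s_def power2_eq_square field_simps)
  then have col: "(\<Sum>n<N. \<alpha> ^ n * real (m choose n) * \<beta> ^ (m - n) * s ^ n) \<le> 1 * t ^ m" for m N
    using sum_binomial_column_le[OF \<alpha> \<beta> s, where N=N and m=m] power_mono[of "\<alpha> * s + \<beta>" t m] \<alpha> \<beta> s
    by (simp add: add.commute)
  note Schur = Schur_test[of "\<lambda>n m. \<alpha> ^ n * real (m choose n) * \<beta> ^ (m - n)" "\<lambda>m. t ^ m"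
      "1 / (1 - \<beta> * t)" 1 "\<lambda>n. s ^ n", OF _ _ _ _ sum_binomial_row_le[OF \<alpha> \<beta> t, folded s_def] col x]
  show "summable (\<lambda>m. \<alpha> ^ n * real (m choose n) * \<beta> ^ (m - n) * x m)"
    and "summable (\<lambda>n. (\<Sum>m. \<alpha> ^ n * real (m choose n) * \<beta> ^ (m - n) * x m)\<^sup>2)"
    and "(\<Sum>n. (\<Sum>m. \<alpha> ^ n * real (m choose n) * \<beta> ^ (m - n) * x m)\<^sup>2) \<le> (\<Sum>m. (x m)\<^sup>2) / (1 - \<beta> * t)"
    using Schur \<alpha> \<beta> t by simp_all
qed

lemma norm_affine_less_one:
  fixes a b w :: complex
  assumes ab: "norm a + norm b \<le> 1" and b: "norm b < 1" and w: "norm w < 1"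
  shows "norm (a * w + b) < 1"
proof (cases "a = 0")
  case False
  have "norm (a * w + b) \<le> norm a * norm w + norm b"
    by (metis norm_mult norm_triangle_ineq)
  also have "norm a * norm w < norm a"
    using False w by simp
  finally show ?thesis
    using ab by simp
qed (use b in simp)

lemma norm_taylor_coeff_compose_affine_le:
  fixes a b :: complex
  assumes hol: "f holomorphic_on unit_disc" and ab: "norm a + norm b \<le> 1" and b: "norm b < 1"
    and summable: "summable (\<lambda>m. norm a ^ n * real (m choose n) * norm b ^ (m - n) * norm (taylor_coeff f m))"
  shows "norm (taylor_coeff (\<lambda>z. f (a * z + b)) n)
      \<le> (\<Sum>m. norm a ^ n * real (m choose n) * norm b ^ (m - n) * norm (taylor_coeff f m))"
proof -
  define u where "u m = of_nat (m choose n) * taylor_coeff f m * b ^ (m - n)" for m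
  have "taylor_coeff (\<lambda>z. f (a * z + b)) n = a ^ n * (\<Sum>m. u m)"
    using taylor_coeff_compose_affine[OF hol norm_affine_less_one[OF ab b], of n]
      sums_unique[OF higher_deriv_sums[OF hol b]]
    by (simp add: u_def)
  also have "\<dots> = (\<Sum>m. a ^ n * u m)"
    using higher_deriv_sums[OF hol b] by (intro suminf_mult[symmetric]) (auto simp: u_def sums_iff)
  also have "norm \<dots> \<le> (\<Sum>m. norm (a ^ n * u m))"
    using summable by (intro summable_norm) (simp add: u_def norm_mult norm_power mult_ac)
  also have "\<dots> = (\<Sum>m. norm a ^ n * real (m choose n) * norm b ^ (m - n) * norm (taylor_coeff f m))"
    by (simp add: u_def norm_mult norm_power mult_ac)
  finally show ?thesis .
qed

lemma H2_compose_affine: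
  fixes a b :: complex
  assumes f: "f \<in> H2" and ab: "norm a + norm b \<le> 1" and b: "norm b < 1"
  shows "(\<lambda>z. f (a * z + b)) \<in> H2"
    and "(H2_norm (\<lambda>z. f (a * z + b)))\<^sup>2 \<le> cowen_constant (norm a) (norm b) * (H2_norm f)\<^sup>2"
proof -
  have hol: "f holomorphic_on unit_disc" and sum_x: "summable (\<lambda>m. (norm (taylor_coeff f m))\<^sup>2)"
    using f by (auto simp: H2_def)
  define g where "g = (\<lambda>z. f (a * z + b))"
  define y where "y n = (\<Sum>m. norm a ^ n * real (m choose n) * norm b ^ (m - n) * norm (taylor_coeff f m))" for n
  have "(\<lambda>z. a * z + b) ` unit_disc \<subseteq> unit_disc"
    using norm_affine_less_one[OF ab b] by auto
  then have hol_g: "g holomorphic_on unit_disc"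
    using holomorphic_on_compose_gen[OF _ hol, of "\<lambda>z. a * z + b"] by (simp add: g_def o_def holomorphic_intros)
  obtain t where t: "0 < t" "norm b * t < 1"
    and root: "norm b * t\<^sup>2 - (1 - (norm a)\<^sup>2 + (norm b)\<^sup>2) * t + norm b \<le> 0"
    and cowen: "cowen_constant (norm a) (norm b) = 1 / (1 - norm b * t)"
    using cowen_parameter[OF norm_ge_zero norm_ge_zero b ab] by blast
  note Schur = affine_coeff_sq_sum_le[OF sum_x norm_ge_zero norm_ge_zero t root]
  have sq_le: "(norm (taylor_coeff g n))\<^sup>2 \<le> (y n)\<^sup>2" for n
    unfolding g_def y_def
    by (intro power_mono norm_taylor_coeff_compose_affine_le[OF hol ab b Schur(1)] norm_ge_zero)
  have sum_y: "summable (\<lambda>n. (y n)\<^sup>2)"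
    using Schur(2) by (simp only: y_def)
  have sum_g: "summable (\<lambda>n. (norm (taylor_coeff g n))\<^sup>2)"
    using sq_le by (intro summable_comparison_test'[OF sum_y]) simp
  then show "(\<lambda>z. f (a * z + b)) \<in> H2"
    using hol_g by (simp add: H2_def g_def)
  then have "(H2_norm (\<lambda>z. f (a * z + b)))\<^sup>2 = (\<Sum>n. (norm (taylor_coeff g n))\<^sup>2)"
    by (simp add: H2_norm_power2 g_def)
  also have "\<dots> \<le> (\<Sum>n. (y n)\<^sup>2)"
    by (rule suminf_le[OF sq_le sum_g sum_y])
  also have "\<dots> \<le> (\<Sum>m. (norm (taylor_coeff f m))\<^sup>2) / (1 - norm b * t)"
    using Schur(3) by (simp only: y_def)
  also have "\<dots> = cowen_constant (norm a) (norm b) * (H2_norm f)\<^sup>2"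
    by (simp add: cowen H2_norm_power2[OF f])
  finally show "(H2_norm (\<lambda>z. f (a * z + b)))\<^sup>2 \<le> cowen_constant (norm a) (norm b) * (H2_norm f)\<^sup>2" .
qed

section \<open>Inner functions and reproducing kernels\<close>

lemma one_minus_mult_neq_zero:
  fixes e z :: complex
  assumes "norm e * norm z < 1"
  shows "1 - e * z \<noteq> 0"
  using assms by (auto simp: norm_mult[symmetric])

definition szego_kernel :: "complex \<Rightarrow> complex \<Rightarrow> complex" where
  "szego_kernel w z = 1 / (1 - cnj w * z)"

lemma szego_kernel_H2:
  assumes w: "norm w < 1"
  shows "szego_kernel w \<in> H2" and "(H2_norm (szego_kernel w))\<^sup>2 = 1 / (1 - (norm w)\<^sup>2)"
proof -
  have "1 - cnj w * z \<noteq> 0" if "norm z < 1" for z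
    using w that mult_strict_mono'[of "norm w" 1 "norm z" 1] by (intro one_minus_mult_neq_zero) simp
  then have hol: "szego_kernel w holomorphic_on unit_disc"
    unfolding szego_kernel_def by (intro holomorphic_intros) auto
  have "taylor_coeff (szego_kernel w) n = cnj w ^ n" for n
    using higher_deriv_inverse_one_minus[of "cnj w" 0 n] by (simp add: taylor_coeff_def szego_kernel_def[abs_def])
  moreover have "(\<lambda>n. ((norm w)\<^sup>2) ^ n) sums (1 / (1 - (norm w)\<^sup>2))"
    using w by (intro geometric_sums) (simp add: abs_square_less_1)
  ultimately have coeff_sums: "(\<lambda>n. (norm (taylor_coeff (szego_kernel w) n))\<^sup>2) sums (1 / (1 - (norm w)\<^sup>2))"
    by (simp add: norm_power power_mult[symmetric] mult.commute)
  then show H2: "szego_kernel w \<in> H2"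
    using hol by (auto simp: H2_def sums_iff)
  show "(H2_norm (szego_kernel w))\<^sup>2 = 1 / (1 - (norm w)\<^sup>2)"
    using H2_norm_power2[OF H2] coeff_sums by (simp add: sums_iff)
qed

lemma H2_cmult:
  assumes f: "f \<in> H2"
  shows "(\<lambda>z. c * f z) \<in> H2" and "H2_norm (\<lambda>z. c * f z) = norm c * H2_norm f"
proof -
  have hol: "f holomorphic_on unit_disc" and sum_f: "summable (\<lambda>n. (norm (taylor_coeff f n))\<^sup>2)"
    using f by (auto simp: H2_def)
  have "taylor_coeff (\<lambda>z. c * f z) n = c * taylor_coeff f n" for n
    using higher_deriv_cmult[OF hol _ open_ball, of 0 n c] by (simp add: taylor_coeff_def)
  then have coeff: "(norm (taylor_coeff (\<lambda>z. c * f z) n))\<^sup>2 = (norm c)\<^sup>2 * (norm (taylor_coeff f n))\<^sup>2" for n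
    by (simp add: norm_mult power_mult_distrib)
  show H2: "(\<lambda>z. c * f z) \<in> H2"
    using hol summable_mult[OF sum_f, of "(norm c)\<^sup>2"] by (auto simp: H2_def coeff intro!: holomorphic_intros)
  have "(H2_norm (\<lambda>z. c * f z))\<^sup>2 = (norm c * H2_norm f)\<^sup>2"
    using H2_norm_power2[OF H2] H2_norm_power2[OF f] suminf_mult[OF sum_f, of "(norm c)\<^sup>2"]
    by (simp add: coeff power_mult_distrib)
  then show "H2_norm (\<lambda>z. c * f z) = norm c * H2_norm f"
    by (rule power2_eq_imp_eq) (use H2_norm_nonneg[OF H2] H2_norm_nonneg[OF f] in auto)
qed

lemma inner_function_norm_less:
  assumes "inner_function \<psi>" and "norm z < 1"
  shows "norm (\<psi> z) < 1"
  using assms unfolding inner_function_def by (auto simp: subset_iff)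

lemma circlepath_0_eq_cis: "circlepath 0 r s = of_real r * cis (2 * pi * s)"
  by (simp add: circlepath cis_conv_exp mult_ac)

lemma inner_function_radial_limits:
  assumes "inner_function \<psi>"
  obtains N where "negligible N"
    and "\<And>s. s \<in> {0..1} - N \<Longrightarrow> \<exists>L. norm L = 1 \<and> ((\<lambda>r. \<psi> (circlepath 0 r s)) \<longlongrightarrow> L) (at_left 1)"
proof -
  from assms obtain N0 where N0: "{t \<in> space lebesgue. \<not> (t \<in> {0..2*pi} \<longrightarrow>
        (\<exists>L. norm L = 1 \<and> ((\<lambda>r. \<psi> (complex_of_real r * cis t)) \<longlongrightarrow> L) (at_left 1)))} \<subseteq> N0"
      "emeasure lebesgue N0 = 0" "N0 \<in> sets lebesgue"
    unfolding inner_function_def by (elim conjE AE_E)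
  define N where "N = (\<lambda>t. t / (2 * pi)) ` N0"
  have "negligible N"
    unfolding N_def
  proof (rule negligible_locally_Lipschitz_image)
    show "negligible N0"
      using N0 by (simp add: negligible_iff_null_sets null_sets_def)
    fix t
    show "\<exists>T B. open T \<and> t \<in> T \<and> (\<forall>y\<in>N0 \<inter> T. norm (y / (2 * pi) - t / (2 * pi)) \<le> B * norm (y - t))"
      by (rule exI[of _ UNIV], rule exI[of _ "1 / (2 * pi)"]) (auto simp: diff_divide_distrib[symmetric])
  qed simp
  moreover have "\<exists>L. norm L = 1 \<and> ((\<lambda>r. \<psi> (circlepath 0 r s)) \<longlongrightarrow> L) (at_left 1)" if s: "s \<in> {0..1} - N" for s
  proof -
    have "2 * pi * s \<notin> N0"
      using s by (force simp: N_def)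
    moreover have "2 * pi * s \<in> {0..2 * pi}" "2 * pi * s \<in> space lebesgue"
      using s by simp_all
    ultimately have "\<exists>L. norm L = 1 \<and> ((\<lambda>r. \<psi> (of_real r * cis (2 * pi * s))) \<longlongrightarrow> L) (at_left 1)"
      using N0(1) by blast
    then show ?thesis
      by (simp add: circlepath_0_eq_cis)
  qed
  ultimately show thesis
    using that by blast
qed

lemma inner_function_circle_mean_sq_tendsto:
  assumes inner: "inner_function \<psi>"
  shows "((\<lambda>r. circle_mean_sq \<psi> r) \<longlongrightarrow> 1) (at_left 1)"
proof (rule tendsto_at_left_sequentially[of 0])
  fix \<rho> :: "nat \<Rightarrow> real"
  assume \<rho>: "\<And>k. \<rho> k < 1" "\<And>k. 0 < \<rho> k" and "\<rho> \<longlonglongrightarrow> 1"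
  then have \<rho>_lim: "filterlim \<rho> (at_left 1) sequentially"
    unfolding filterlim_at by (auto intro!: always_eventually simp: less_imp_neq)
  have hol: "\<psi> holomorphic_on unit_disc"
    using inner by (simp add: inner_function_def)
  obtain N where N: "negligible N"
    and lim: "\<And>s. s \<in> {0..1} - N \<Longrightarrow> \<exists>L. norm L = 1 \<and> ((\<lambda>r. \<psi> (circlepath 0 r s)) \<longlongrightarrow> L) (at_left 1)"
    using inner_function_radial_limits[OF inner] by blast
  define g where "g k s = (if s \<in> N then 1 else (norm (\<psi> (circlepath 0 (\<rho> k) s)))\<^sup>2)" for k s
  have g_integral: "(g k has_integral circle_mean_sq \<psi> (\<rho> k)) {0..1}" for k
    by (rule has_integral_spike[OF N _ has_integral_circle_mean_sq[OF hol \<rho>(2) \<rho>(1)]]) (simp add: g_def)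
  have g_le: "norm (g k s) \<le> 1" for k s
    using inner_function_norm_less[OF inner, of "circlepath 0 (\<rho> k) s"] \<rho>[of k]
    by (simp add: g_def abs_square_le_1 less_imp_le)
  have g_lim: "(\<lambda>k. g k s) \<longlonglongrightarrow> 1" if "s \<in> {0..1}" for s
  proof (cases "s \<in> N")
    case False
    with lim that obtain L where "norm L = 1" "((\<lambda>r. \<psi> (circlepath 0 r s)) \<longlongrightarrow> L) (at_left 1)"
      by blast
    with filterlim_compose[OF this(2) \<rho>_lim] have "(\<lambda>k. (norm (\<psi> (circlepath 0 (\<rho> k) s)))\<^sup>2) \<longlonglongrightarrow> 1"
      by (metis (no_types) tendsto_norm power_one tendsto_power)
    then show ?thesis
      using False by (simp add: g_def)
  qed (simp add: g_def)
  have "(\<lambda>k. integral {0..1} (g k)) \<longlonglongrightarrow> integral {0..1} (\<lambda>s::real. 1::real)"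
    by (rule dominated_convergence(2)[where h="\<lambda>_. 1"])
      (use g_integral g_le g_lim in \<open>auto intro: has_integral_integrable\<close>)
  moreover have "integral {0..1} (g k) = circle_mean_sq \<psi> (\<rho> k)" for k
    using g_integral by (rule integral_unique)
  ultimately show "(\<lambda>k. circle_mean_sq \<psi> (\<rho> k)) \<longlonglongrightarrow> 1"
    by simp
qed simp

lemma norm_mult_inner_function_le:
  assumes "inner_function \<psi>" and "norm z < 1"
  shows "norm (z * \<psi> z) \<le> norm z"
  using inner_function_norm_less[OF assms] by (simp add: norm_mult mult_left_le)

text \<open>Uses the Poisson kernel identity \<open>Re ((1 + z) / (1 - z)) = (1 - \<bar>z\<bar>\<^sup>2) / \<bar>1 - z\<bar>\<^sup>2\<close> at \<open>z = e w\<close>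
  and \<open>\<bar>1 - e w\<bar> \<ge> 1 - \<bar>e\<bar>\<close>.\<close>

lemma inverse_norm_sq_one_minus_ge:
  fixes e w :: complex
  assumes e: "norm e < 1" and w: "norm w < 1"
  shows "Re ((1 + e * w) / (1 - e * w)) / (1 - (norm e)\<^sup>2)
      - (norm e)\<^sup>2 / ((1 - norm e)\<^sup>2 * (1 - (norm e)\<^sup>2)) * (1 - (norm w)\<^sup>2)
      \<le> 1 / (norm (1 - e * w))\<^sup>2"
proof -
  define z where "z = e * w"
  define E where "E = norm e"
  define W where "W = norm w"
  define A where "A = (norm (1 - z))\<^sup>2"
  have E: "0 \<le> E" "E < 1" and W: "0 \<le> W" "W < 1"
    using e w by (auto simp: E_def W_def)
  have "1 - E \<le> 1 - norm z"
    using w mult_left_le[of W E] by (simp add: z_def E_def W_def norm_mult)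
  also have "\<dots> \<le> norm (1 - z)"
    by (metis norm_one norm_triangle_ineq2)
  finally have A_ge: "(1 - E)\<^sup>2 \<le> A"
    unfolding A_def by (rule power_mono) (use E in simp)
  moreover have "0 < (1 - E)\<^sup>2"
    using E by simp
  ultimately have A_pos: "0 < A"
    by linarith
  have A_eq: "A = (1 - Re z)\<^sup>2 + (Im z)\<^sup>2"
    unfolding A_def by (simp add: cmod_power2)
  have "Re ((1 + z) / (1 - z)) = ((1 + Re z) * (1 - Re z) + Im z * (- Im z)) / ((1 - Re z)\<^sup>2 + (Im z)\<^sup>2)"
    by (simp add: Re_divide)
  also have "\<dots> = (1 - (Re z)\<^sup>2 - (Im z)\<^sup>2) / A"
    unfolding A_eq by (simp add: power2_eq_square algebra_simps)
  also have "(Re z)\<^sup>2 + (Im z)\<^sup>2 = (norm z)\<^sup>2"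
    by (simp add: cmod_power2)
  then have "(Re z)\<^sup>2 + (Im z)\<^sup>2 = E\<^sup>2 * W\<^sup>2"
    by (simp add: z_def E_def W_def norm_mult power_mult_distrib)
  then have "(1 - (Re z)\<^sup>2 - (Im z)\<^sup>2) / A = (1 - E\<^sup>2 * W\<^sup>2) / A"
    by (simp add: algebra_simps)
  finally have Re: "Re ((1 + z) / (1 - z)) = (1 - E\<^sup>2 * W\<^sup>2) / A" .
  have E2: "0 < 1 - E\<^sup>2"
    using E by (simp add: abs_square_less_1)
  have "(1 - E\<^sup>2 * W\<^sup>2) / A / (1 - E\<^sup>2) = 1 / A + E\<^sup>2 * (1 - W\<^sup>2) / (A * (1 - E\<^sup>2))"
    using A_pos E2 by (simp add: field_simps)
  moreover have "E\<^sup>2 * (1 - W\<^sup>2) / (A * (1 - E\<^sup>2)) \<le> E\<^sup>2 * (1 - W\<^sup>2) / ((1 - E)\<^sup>2 * (1 - E\<^sup>2))"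
    using W A_pos E2 E A_ge by (intro divide_left_mono mult_right_mono mult_nonneg_nonneg)
      (simp_all add: abs_square_le_1)
  ultimately show ?thesis
    unfolding z_def[symmetric] Re A_def[symmetric] E_def[symmetric] W_def[symmetric]
    by (simp add: mult_ac)
qed

lemma circle_mean_sq_szego_compose_inner_ge:
  assumes inner: "inner_function \<psi>" and w: "norm w < 1" and r: "0 < r" "r < 1"
  defines "K \<equiv> (norm w)\<^sup>2 / ((1 - norm w)\<^sup>2 * (1 - (norm w)\<^sup>2))"
  shows "1 / (1 - (norm w)\<^sup>2) - K * (1 - r\<^sup>2 * circle_mean_sq \<psi> r)
      \<le> circle_mean_sq (\<lambda>z. szego_kernel w (z * \<psi> z)) r"
proof -
  define e where "e = cnj w"
  define \<gamma> where "\<gamma> = circlepath 0 r"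
  define P where "P z = (1 + e * (z * \<psi> z)) / (1 - e * (z * \<psi> z))" for z
  have hol: "\<psi> holomorphic_on unit_disc"
    using inner by (simp add: inner_function_def)
  have e: "norm e < 1"
    using w by (simp add: e_def)
  have nz: "1 - e * (z * \<psi> z) \<noteq> 0" if "norm z < 1" for z
    using norm_mult_inner_function_le[OF inner that] that e mult_strict_mono'[of "norm e" 1 "norm (z * \<psi> z)" 1]
    by (intro one_minus_mult_neq_zero) simp
  have hol_P: "P holomorphic_on unit_disc"
    unfolding P_def using nz by (intro holomorphic_intros hol) auto
  have hol_G: "(\<lambda>z. szego_kernel w (z * \<psi> z)) holomorphic_on unit_disc"
    unfolding szego_kernel_def e_def[symmetric] using nz by (intro holomorphic_intros hol) auto
  have "((\<lambda>s. P (\<gamma> s)) has_integral 1) {0..1}"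
    using taylor_coeff_has_integral_circlepath[OF hol_P r, of 0] by (simp add: \<gamma>_def taylor_coeff_def P_def)
  from has_integral_linear[OF this bounded_linear_Re]
  have "((\<lambda>s. Re (P (\<gamma> s))) has_integral 1) {0..1}"
    by (simp add: o_def)
  then have lower_integral: "((\<lambda>s. Re (P (\<gamma> s)) / (1 - (norm w)\<^sup>2) - K * (1 - r\<^sup>2 * (norm (\<psi> (\<gamma> s)))\<^sup>2))
      has_integral (1 / (1 - (norm w)\<^sup>2) - K * (1 - r\<^sup>2 * circle_mean_sq \<psi> r))) {0..1}"
    unfolding \<gamma>_def
    by (intro has_integral_diff has_integral_divide has_integral_mult_right
        has_integral_const_real[of 1 0 1, simplified] has_integral_circle_mean_sq[OF hol r])
  show ?thesis
  proof (rule has_integral_le[OF lower_integral])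
    show "((\<lambda>s. (norm (szego_kernel w (\<gamma> s * \<psi> (\<gamma> s))))\<^sup>2) has_integral
        circle_mean_sq (\<lambda>z. szego_kernel w (z * \<psi> z)) r) {0..1}"
      unfolding \<gamma>_def by (rule has_integral_circle_mean_sq[OF hol_G r])
    fix s
    have "norm (\<gamma> s * \<psi> (\<gamma> s)) < 1"
      using norm_mult_inner_function_le[OF inner, of "\<gamma> s"] r by (simp add: \<gamma>_def)
    from inverse_norm_sq_one_minus_ge[OF e this]
    show "Re (P (\<gamma> s)) / (1 - (norm w)\<^sup>2) - K * (1 - r\<^sup>2 * (norm (\<psi> (\<gamma> s)))\<^sup>2)
        \<le> (norm (szego_kernel w (\<gamma> s * \<psi> (\<gamma> s))))\<^sup>2"
      using r by (simp add: P_def K_def e_def szego_kernel_def \<gamma>_def norm_mult norm_divide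
          power_mult_distrib power_divide)
  qed
qed

text \<open>In fact \<open>C\<^sub>u\<close> is an isometry for the inner function \<open>u z = z \<psi> z\<close>.\<close>

lemma szego_compose_inner_H2_norm_ge:
  assumes inner: "inner_function \<psi>" and w: "norm w < 1"
  shows "(\<lambda>z. szego_kernel w (z * \<psi> z)) \<in> H2"
    and "1 / (1 - (norm w)\<^sup>2) \<le> (H2_norm (\<lambda>z. szego_kernel w (z * \<psi> z)))\<^sup>2"
proof -
  define K where "K = (norm w)\<^sup>2 / ((1 - norm w)\<^sup>2 * (1 - (norm w)\<^sup>2))"
  have "(\<lambda>z. z * \<psi> z) holomorphic_on unit_disc"
    using inner by (intro holomorphic_intros) (simp add: inner_function_def)
  from littlewood_subordination(1)[OF szego_kernel_H2(1)[OF w] this norm_mult_inner_function_le[OF inner]]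
  show H2: "(\<lambda>z. szego_kernel w (z * \<psi> z)) \<in> H2" .
  have "((\<lambda>r. 1 / (1 - (norm w)\<^sup>2) - K * (1 - r\<^sup>2 * circle_mean_sq \<psi> r)) \<longlongrightarrow>
      1 / (1 - (norm w)\<^sup>2) - K * (1 - 1\<^sup>2 * 1)) (at_left 1)"
    by (intro tendsto_intros inner_function_circle_mean_sq_tendsto[OF inner])
  moreover have "\<forall>\<^sub>F r in at_left 1. 1 / (1 - (norm w)\<^sup>2) - K * (1 - r\<^sup>2 * circle_mean_sq \<psi> r)
      \<le> (H2_norm (\<lambda>z. szego_kernel w (z * \<psi> z)))\<^sup>2"
  proof (rule eventually_mono[OF eventually_at_left_real[of 0 1]])
    fix r :: real
    assume "r \<in> {0<..<1}"
    then have r: "0 < r" "r < 1" by auto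
    from circle_mean_sq_szego_compose_inner_ge[OF inner w r] circle_mean_sq_le_H2_norm[OF H2 r]
    show "1 / (1 - (norm w)\<^sup>2) - K * (1 - r\<^sup>2 * circle_mean_sq \<psi> r)
        \<le> (H2_norm (\<lambda>z. szego_kernel w (z * \<psi> z)))\<^sup>2"
      unfolding K_def by linarith
  qed simp
  ultimately show "1 / (1 - (norm w)\<^sup>2) \<le> (H2_norm (\<lambda>z. szego_kernel w (z * \<psi> z)))\<^sup>2"
    by (simp add: tendsto_upperbound)
qed

lemma H2_zero: "(\<lambda>z. 0) \<in> H2" "H2_norm (\<lambda>z. 0) = 0"
  by (simp_all add: H2_def H2_norm_def taylor_coeff_def)

lemma comp_op_norm_le:
  assumes bound: "\<And>f. f \<in> H2 \<Longrightarrow> H2_norm (comp_op \<phi> f) \<le> M * H2_norm f" and M: "0 \<le> M"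
  shows "bdd_above ((\<lambda>f. H2_norm (comp_op \<phi> f)) ` {f \<in> H2. H2_norm f \<le> 1})"
    and "comp_op_norm \<phi> \<le> M"
proof -
  have le_M: "H2_norm (comp_op \<phi> f) \<le> M" if "f \<in> H2" "H2_norm f \<le> 1" for f
    using bound[OF that(1)] mult_left_mono[OF that(2) M] by simp
  then show "bdd_above ((\<lambda>f. H2_norm (comp_op \<phi> f)) ` {f \<in> H2. H2_norm f \<le> 1})"
    by (intro bdd_aboveI2[where M=M]) auto
  have "{f \<in> H2. H2_norm f \<le> 1} \<noteq> {}"
    using H2_zero by auto
  then show "comp_op_norm \<phi> \<le> M"
    unfolding comp_op_norm_def by (rule cSUP_least) (use le_M in auto)
qed

lemma H2_norm_comp_op_le:
  assumes bdd: "bdd_above ((\<lambda>f. H2_norm (comp_op \<phi> f)) ` {f \<in> H2. H2_norm f \<le> 1})"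
    and f: "f \<in> H2" "comp_op \<phi> f \<in> H2" and f_pos: "0 < H2_norm f"
  shows "H2_norm (comp_op \<phi> f) \<le> comp_op_norm \<phi> * H2_norm f"
proof -
  define c where "c = complex_of_real (1 / H2_norm f)"
  have "(\<lambda>z. c * f z) \<in> H2" "H2_norm (\<lambda>z. c * f z) = 1"
    using H2_cmult[OF f(1), of c] f_pos by (simp_all add: c_def norm_divide)
  then have "H2_norm (comp_op \<phi> (\<lambda>z. c * f z)) \<le> comp_op_norm \<phi>"
    unfolding comp_op_norm_def by (intro cSUP_upper[OF _ bdd]) auto
  moreover have "comp_op \<phi> (\<lambda>z. c * f z) = (\<lambda>z. c * comp_op \<phi> f z)"
    by (simp add: comp_op_def o_def)
  ultimately have "H2_norm (comp_op \<phi> f) / H2_norm f \<le> comp_op_norm \<phi>"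
    using H2_cmult(2)[OF f(2), of c] f_pos by (simp add: c_def norm_divide)
  then show ?thesis
    using f_pos by (simp add: divide_le_eq)
qed

lemma comp_op_norm_nonneg:
  assumes bdd: "bdd_above ((\<lambda>f. H2_norm (comp_op \<phi> f)) ` {f \<in> H2. H2_norm f \<le> 1})"
  shows "0 \<le> comp_op_norm \<phi>"
proof -
  have "H2_norm (comp_op \<phi> (\<lambda>z. 0)) \<le> comp_op_norm \<phi>"
    unfolding comp_op_norm_def using H2_zero by (intro cSUP_upper[OF _ bdd]) auto
  moreover have "comp_op \<phi> (\<lambda>z. 0) = (\<lambda>z. 0)"
    by (simp add: comp_op_def o_def)
  ultimately show ?thesis
    using H2_zero(2) by simp
qed

text \<open>\<open>f (a z \<psi> z + b)\<close> is \<open>f (a w + b)\<close> subordinated by \<open>w = z \<psi> z\<close>.\<close>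

lemma comp_op_inner_affine:
  fixes a b :: complex
  assumes inner: "inner_function \<psi>" and ab: "norm a + norm b \<le> 1" and b: "norm b < 1" and f: "f \<in> H2"
  shows "comp_op (\<lambda>z. a * z * \<psi> z + b) f \<in> H2"
    and "H2_norm (comp_op (\<lambda>z. a * z * \<psi> z + b) f) \<le> sqrt (cowen_constant (norm a) (norm b)) * H2_norm f"
proof -
  have eq: "comp_op (\<lambda>z. a * z * \<psi> z + b) f = (\<lambda>z. f (a * (z * \<psi> z) + b))"
    by (simp add: comp_op_def o_def mult.assoc)
  have "(\<lambda>z. z * \<psi> z) holomorphic_on unit_disc"
    using inner by (intro holomorphic_intros) (simp add: inner_function_def)
  note subordinate = littlewood_subordination[OF H2_compose_affine(1)[OF f ab b] this
      norm_mult_inner_function_le[OF inner]]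
  show "comp_op (\<lambda>z. a * z * \<psi> z + b) f \<in> H2"
    using subordinate(1) eq by simp
  have "(H2_norm (comp_op (\<lambda>z. a * z * \<psi> z + b) f))\<^sup>2 \<le> cowen_constant (norm a) (norm b) * (H2_norm f)\<^sup>2"
    using subordinate(2) H2_compose_affine(2)[OF f ab b] eq by simp
  then have "H2_norm (comp_op (\<lambda>z. a * z * \<psi> z + b) f) \<le> sqrt (cowen_constant (norm a) (norm b) * (H2_norm f)\<^sup>2)"
    by (rule real_le_rsqrt)
  then show "H2_norm (comp_op (\<lambda>z. a * z * \<psi> z + b) f) \<le> sqrt (cowen_constant (norm a) (norm b)) * H2_norm f"
    using H2_norm_nonneg[OF f] by (simp add: real_sqrt_mult)
qed

lemma norm_mult_less_norm_one_minus_cnj_mult: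
  fixes a b w :: complex
  assumes ab: "norm a + norm b \<le> 1" and w: "norm w < 1"
  shows "norm w * norm a < norm (1 - cnj w * b)"
proof -
  have "1 - norm w * norm b \<le> norm (1 - cnj w * b)"
    by (metis norm_mult complex_mod_cnj norm_one norm_triangle_ineq2)
  moreover have "norm w * norm a + norm w * norm b < 1"
    using mult_left_mono[OF ab, of "norm w"] w by (simp add: algebra_simps)
  ultimately show ?thesis
    by linarith
qed

lemma comp_op_szego_kernel_inner_affine:
  fixes a b w :: complex
  defines "D \<equiv> 1 - cnj w * b"
  assumes D: "D \<noteq> 0"
  shows "comp_op (\<lambda>z. a * z * \<psi> z + b) (szego_kernel w)
      = (\<lambda>z. (1 / D) * szego_kernel (w * cnj a / cnj D) (z * \<psi> z))"
proof
  fix z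
  have "1 - cnj w * (a * z * \<psi> z + b) = D * (1 - cnj (w * cnj a / cnj D) * (z * \<psi> z))"
    using D by (simp add: D_def field_simps)
  then show "comp_op (\<lambda>z. a * z * \<psi> z + b) (szego_kernel w) z = (1 / D) * szego_kernel (w * cnj a / cnj D) (z * \<psi> z)"
    by (simp add: comp_op_def szego_kernel_def)
qed

lemma H2_norm_comp_op_szego_kernel_ge:
  fixes a b w :: complex
  assumes inner: "inner_function \<psi>" and ab: "norm a + norm b \<le> 1" and w: "norm w < 1"
  shows "1 / ((norm (1 - cnj w * b))\<^sup>2 - (norm w * norm a)\<^sup>2)
      \<le> (H2_norm (comp_op (\<lambda>z. a * z * \<psi> z + b) (szego_kernel w)))\<^sup>2"
proof -
  define D where "D = 1 - cnj w * b"
  define v where "v = w * cnj a / cnj D"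
  have D: "norm w * norm a < norm D"
    unfolding D_def by (rule norm_mult_less_norm_one_minus_cnj_mult[OF ab w])
  then have D_nz: "D \<noteq> 0"
    by (metis norm_zero not_less zero_le_mult_iff norm_ge_zero)
  have v: "norm v < 1"
    using D D_nz by (simp add: v_def norm_mult norm_divide divide_less_eq)
  note kv = szego_compose_inner_H2_norm_ge[OF inner v]
  have "1 / ((norm D)\<^sup>2 - (norm w * norm a)\<^sup>2) = 1 / (norm D)\<^sup>2 * (1 / (1 - (norm v)\<^sup>2))"
    using D_nz by (simp add: v_def norm_mult norm_divide power_divide power_mult_distrib field_simps)
  also have "\<dots> \<le> 1 / (norm D)\<^sup>2 * (H2_norm (\<lambda>z. szego_kernel v (z * \<psi> z)))\<^sup>2"
    by (rule mult_left_mono[OF kv(2)]) simp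
  also have "\<dots> = (H2_norm (comp_op (\<lambda>z. a * z * \<psi> z + b) (szego_kernel w)))\<^sup>2"
    unfolding comp_op_szego_kernel_inner_affine[OF D_nz[unfolded D_def]] D_def[symmetric] v_def[symmetric]
      H2_cmult(2)[OF kv(1)]
    by (simp add: norm_divide power_mult_distrib power_divide)
  finally show ?thesis
    by (simp only: D_def)
qed

lemma comp_op_norm_inner_affine_ge:
  fixes a b w :: complex
  assumes inner: "inner_function \<psi>" and ab: "norm a + norm b \<le> 1" and b: "norm b < 1"
    and bdd: "bdd_above ((\<lambda>f. H2_norm (comp_op (\<lambda>z. a * z * \<psi> z + b) f)) ` {f \<in> H2. H2_norm f \<le> 1})"
    and w: "norm w < 1"
  shows "(1 - (norm w)\<^sup>2) / ((norm (1 - cnj w * b))\<^sup>2 - (norm w * norm a)\<^sup>2)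
      \<le> (comp_op_norm (\<lambda>z. a * z * \<psi> z + b))\<^sup>2"
proof -
  define N where "N = comp_op_norm (\<lambda>z. a * z * \<psi> z + b)"
  define X where "X = (norm (1 - cnj w * b))\<^sup>2 - (norm w * norm a)\<^sup>2"
  have k: "szego_kernel w \<in> H2" "(H2_norm (szego_kernel w))\<^sup>2 = 1 / (1 - (norm w)\<^sup>2)"
    by (rule szego_kernel_H2[OF w])+
  have w2: "0 < 1 - (norm w)\<^sup>2"
    using w by (simp add: abs_square_less_1)
  have Ck: "comp_op (\<lambda>z. a * z * \<psi> z + b) (szego_kernel w) \<in> H2"
    by (rule comp_op_inner_affine(1)[OF inner ab b k(1)])
  have "0 < H2_norm (szego_kernel w)"
    using k(2) w2 H2_norm_nonneg[OF k(1)] by (auto simp: less_le)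
  from H2_norm_comp_op_le[OF bdd k(1) Ck this]
  have "(H2_norm (comp_op (\<lambda>z. a * z * \<psi> z + b) (szego_kernel w)))\<^sup>2 \<le> (N * H2_norm (szego_kernel w))\<^sup>2"
    using H2_norm_nonneg[OF Ck] by (simp add: N_def power_mono)
  with H2_norm_comp_op_szego_kernel_ge[OF inner ab w]
  have "1 / X \<le> N\<^sup>2 / (1 - (norm w)\<^sup>2)"
    by (simp add: X_def power_mult_distrib k(2))
  then have "(1 - (norm w)\<^sup>2) * (1 / X) \<le> (1 - (norm w)\<^sup>2) * (N\<^sup>2 / (1 - (norm w)\<^sup>2))"
    using w2 by (intro mult_left_mono) simp_all
  then show ?thesis
    using w2 by (simp add: N_def X_def)
qed

lemma comp_op_norm_inner_affine_radial_ge: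
  fixes a b :: complex and s :: real
  assumes inner: "inner_function \<psi>" and ab: "norm a + norm b \<le> 1" and b: "norm b < 1"
    and bdd: "bdd_above ((\<lambda>f. H2_norm (comp_op (\<lambda>z. a * z * \<psi> z + b) f)) ` {f \<in> H2. H2_norm f \<le> 1})"
    and s: "0 \<le> s" "s < 1"
  shows "(1 - s\<^sup>2) / ((1 - s * norm b)\<^sup>2 - (s * norm a)\<^sup>2) \<le> (comp_op_norm (\<lambda>z. a * z * \<psi> z + b))\<^sup>2"
proof -
  obtain u where u: "norm u = 1" "cnj u * b = of_real (norm b)"
  proof (cases "b = 0")
    case False
    have "cnj b * b = of_real ((norm b)\<^sup>2)"
      by (subst complex_norm_square) (rule mult.commute)
    then show thesis
      using False by (intro that[of "b / of_real (norm b)"]) (simp_all add: norm_divide power2_eq_square)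
  qed (intro that[of 1], simp_all)
  define w where "w = of_real s * u"
  have "norm w = s" and w_b: "cnj w * b = of_real (s * norm b)"
    using u s by (simp_all add: w_def norm_mult mult.assoc)
  moreover have "norm (1 - cnj w * b) = 1 - s * norm b"
    unfolding w_b using s b mult_le_one[of s "norm b"]
    by (metis abs_of_nonneg diff_ge_0_iff_ge norm_of_real of_real_1 of_real_diff less_imp_le norm_ge_zero)
  ultimately show ?thesis
    using comp_op_norm_inner_affine_ge[OF inner ab b bdd, of w] s by (simp add: mult.commute)
qed

theorem proposition2p4:
  fixes \<psi> :: "complex \<Rightarrow> complex" and a b :: complex
  assumes "inner_function \<psi>"
    and "b \<in> unit_disc"
    and "norm a + norm b \<le> 1"
    and "\<phi> = (\<lambda>z. a * z * \<psi> z + b)"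
  shows "(\<forall>f \<in> H2. comp_op \<phi> f \<in> H2)
    \<and> bdd_above ((\<lambda>f. H2_norm (comp_op \<phi> f)) ` {f \<in> H2. H2_norm f \<le> 1})
    \<and> comp_op_norm \<phi> =
       sqrt (2 / (1 + (norm a)\<^sup>2 - (norm b)\<^sup>2
              + sqrt ((1 - (norm a)\<^sup>2 + (norm b)\<^sup>2)\<^sup>2 - 4 * (norm b)\<^sup>2)))"
proof -
  note inner = assms(1) and ab = assms(3)
  have b: "norm b < 1"
    using assms(2) by simp
  note bounded = comp_op_inner_affine[OF inner ab b, folded assms(4)]
  have bdd: "bdd_above ((\<lambda>f. H2_norm (comp_op \<phi> f)) ` {f \<in> H2. H2_norm f \<le> 1})"
    and upper: "comp_op_norm \<phi> \<le> sqrt (cowen_constant (norm a) (norm b))"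
    using comp_op_norm_le[OF bounded(2) real_sqrt_ge_zero[OF cowen_constant_nonneg[OF norm_ge_zero norm_ge_zero b ab]]]
    by simp_all
  have "cowen_constant (norm a) (norm b) \<le> (comp_op_norm \<phi>)\<^sup>2"
    using comp_op_norm_inner_affine_radial_ge[OF inner ab b bdd[unfolded assms(4)]] ab b
    by (intro cowen_constant_le) (simp_all add: assms(4))
  then have "sqrt (cowen_constant (norm a) (norm b)) \<le> comp_op_norm \<phi>"
    by (rule real_le_lsqrt[OF comp_op_norm_nonneg[OF bdd]])
  with bounded(1) bdd upper show ?thesis
    by (simp add: cowen_constant_def)
qed

end
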